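(* For two-server CARD, \[ \mathbb E[B]\le\frac{m_+}{\beta},\qquad \mathbb E[B_e]\le\frac{c+m_+}{\beta}\le\frac{2c}{\beta},\qquad \mathbb E[(B_e)_e]\le\frac{c+m_+}{\beta}\le\frac{2c}{\beta}. \]
   Context: Two-server model: servers $1$ (short, work $W_s$) and $2$ (long, work $W_\ell$), each with its own FCFS queue, each completing work at rate $1/2$ while nonempty. Poisson arrivals of rate $\lambda$, i.i.d. job sizes $S$ with continuous distribution and $\mathbb E[S^2]<\infty$; $\rho=\lambda\mathbb E[S]$, $\epsilon=1-\rho<1/2$. CARD with parameters $0\le m_-\le m_+\le c$: jobs of size $<m_-$ go to the short server; jobs of size in $[m_-,m_+)$ go to the short server if $W_s\le c$ at arrival and to the long server otherwise; jobs of size $\ge m_+$ go to the long server. $\rho_s=\lambda\mathbb E[S\mathbf 1(S<m_-)]$, $\rho_m=\lambda\mathbb E[S\mathbf 1(m_-\le S<m_+)]$, $\alpha=\frac12-\rho_s>0$, $\beta=\rho_s+\rho_m-\frac12>0$. Below/above periods: time $t$ is in a below period if $W_s(t)\le c$ and in an above period if $W_s(t)>c$; a below-above cycle is a complete below period followed by a complete above period (cycles start at times with $W_s(t)=c$). In a cycle starting at time $0$, $B=\inf\{t>0:W_s(t)>c\}$ and $A=\inf\{t>B:W_s(t)=c\}-B$... more precisely $B$ and $A$ denote the lengths of the below and above periods of a generic (stationary) below-above cycle. For a nonnegative random variable $V$ with finite positive mean, its excess $V_e$ has density $\mathbb P(V>t)/\mathbb E[V]$, so $\mathbb E[V_e]=\mathbb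 E[V^2]/(2\mathbb E[V])$. *)

theory Defs
  imports "HOL-Probability.Probability"
begin

definition to_short :: "real \<Rightarrow> real \<Rightarrow> real \<Rightarrow> real \<Rightarrow> real \<Rightarrow> bool" where
  "to_short mm mp c w s \<longleftrightarrow> s < mm \<or> (mm \<le> s \<and> s < mp \<and> w \<le> c)"

text \<open>Arrival time of job n (n = 0,1,2,...): T i is the interarrival time before job i.\<close>
definition arr :: "(nat \<Rightarrow> real) \<Rightarrow> nat \<Rightarrow> real" where
  "arr T n = (\<Sum>i<Suc n. T i)"

text \<open>Short-server workload just after the arrival of job n (rate 1/2 service, FCFS),
  starting from short-server workload w0 at time 0.\<close>
fun ws_post :: "real \<Rightarrow> real \<Rightarrow> real \<Rightarrow> real \<Rightarrow> (nat \<Rightarrow> real) \<Rightarrow> (nat \<Rightarrow> real) \<Rightarrow> nat \<Rightarrow> real" where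
  "ws_post mm mp c w0 T S 0 =
     (let w = max 0 (w0 - T 0 / 2) in w + (if to_short mm mp c w (S 0) then S 0 else 0))"
| "ws_post mm mp c w0 T S (Suc n) =
     (let w = max 0 (ws_post mm mp c w0 T S n - T (Suc n) / 2)
      in w + (if to_short mm mp c w (S (Suc n)) then S (Suc n) else 0))"

text \<open>Short-server workload W_s(t) at time t >= 0 (right-continuous).\<close>
definition ws :: "real \<Rightarrow> real \<Rightarrow> real \<Rightarrow> real \<Rightarrow> (nat \<Rightarrow> real) \<Rightarrow> (nat \<Rightarrow> real) \<Rightarrow> real \<Rightarrow> real" where
  "ws mm mp c w0 T S t =
     (if t < arr T 0 then max 0 (w0 - t / 2)
      else (let n = (GREATEST n. arr T n \<le> t)
            in max 0 (ws_post mm mp c w0 T S n - (t - arr T n) / 2)))"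

definition below_len :: "real \<Rightarrow> real \<Rightarrow> real \<Rightarrow> (nat \<Rightarrow> real) \<Rightarrow> (nat \<Rightarrow> real) \<Rightarrow> real" where
  "below_len mm mp c T S = Inf {t. 0 < t \<and> ws mm mp c c T S t > c}"

definition excess :: "real measure \<Rightarrow> real measure" where
  "excess N = density lborel
     (\<lambda>t. ennreal (indicator {0..} t * measure N {t<..} / (\<integral>x. x \<partial>N)))"

end

theory Submission
  imports Defs
begin

text \<open>During a below period the short-server workload stays at most \<open>c\<close>, so every job smaller
  than \<open>m\<^sub>+\<close> joins the short server, and the workload seen at arrivals is a random walk with
  drift \<open>\<beta>/\<lambda>\<close> per arrival, started at \<open>c\<close> and stopped when it exceeds \<open>c\<close> (at most by \<open>m\<^sub>+\<close>).
  Hence the potential \<open>\<phi>(u) = (c + m\<^sub>+ - u)/\<beta>\<close> decreases on average by the mean interarrival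
  time per arrival and stays nonnegative, and optional stopping (through truncated sums) gives
  \<open>E[B] \<le> \<phi>(c) = m\<^sub>+/\<beta>\<close>. Restarting this argument at time \<open>t\<close>, which memorylessness of the
  exponential interarrival times permits, gives \<open>E[(B - t)\<^sup>+] \<le> (c + m\<^sub>+)/\<beta> \<cdot> P(B > t)\<close>: the mean
  residual life of \<open>B\<close> is at most \<open>K = (c + m\<^sub>+)/\<beta>\<close>. This property bounds the mean by \<open>K\<close> and is
  inherited by the excess distribution, whose density is proportional to the tail of \<open>B\<close>; this
  gives the bounds on \<open>E[B\<^sub>e]\<close> and \<open>E[(B\<^sub>e)\<^sub>e]\<close>.\<close>

section \<open>The short-server workload path\<close>

lemma arr_0: "arr T 0 = T 0"
  by (simp add: arr_def)

lemma arr_Suc: "arr T (Suc n) = arr T n + T (Suc n)"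
  by (simp add: arr_def)

lemma arr_strict_mono:
  fixes T :: "nat \<Rightarrow> real"
  assumes "\<And>i. 0 < T i" and "m < n"
  shows "arr T m < arr T n"
  using assms(2)
proof (induction n)
  case (Suc n)
  then show ?case using assms(1)[of "Suc n"] by (cases "m = n") (auto simp: arr_Suc)
qed simp

lemma arr_pos:
  fixes T :: "nat \<Rightarrow> real"
  assumes "\<And>i. 0 < T i"
  shows "0 < arr T n"
proof (cases n)
  case 0
  then show ?thesis using assms[of 0] by (simp add: arr_0)
next
  case (Suc k)
  then have "arr T 0 < arr T n" using arr_strict_mono[OF assms] by simp
  then show ?thesis using assms[of 0] by (simp add: arr_0)
qed

lemma ws_le_before_first_exit:
  fixes T S :: "nat \<Rightarrow> real"
  assumes c: "0 \<le> c" and T_pos: "\<And>i. 0 < T i"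
    and below: "\<And>j. j < N \<Longrightarrow> ws_post mm mp c c T S j \<le> c"
    and t: "0 < t" "t < arr T N"
  shows "ws mm mp c c T S t \<le> c"
proof (cases "t < arr T 0")
  case True
  then show ?thesis using c t by (simp add: ws_def)
next
  case False
  let ?P = "\<lambda>n. arr T n \<le> t"
  define g where "g = (GREATEST n. ?P n)"
  have mono: "m < n \<Longrightarrow> arr T m < arr T n" for m n
    using arr_strict_mono T_pos by blast
  have bounded: "?P n \<Longrightarrow> n < N" for n
    using mono[of N n] t by (cases n N rule: linorder_cases) auto
  have "?P g"
    unfolding g_def by (rule GreatestI_nat[where k = 0 and b = N]) (use False bounded in force)+
  then have "ws_post mm mp c c T S g \<le> c"
    using below bounded by blast
  then have "ws_post mm mp c c T S g - (t - arr T g) / 2 \<le> c"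
    using \<open>?P g\<close> by (simp add: field_simps)
  moreover have "ws mm mp c c T S t = max 0 (ws_post mm mp c c T S g - (t - arr T g) / 2)"
    using False unfolding ws_def g_def by (simp add: Let_def)
  ultimately show ?thesis using c by simp
qed

lemma below_len_first_exit:
  fixes T S :: "nat \<Rightarrow> real"
  assumes c: "0 \<le> c" and T_pos: "\<And>i. 0 < T i"
    and exit: "c < ws_post mm mp c c T S N"
    and below: "\<And>j. j < N \<Longrightarrow> ws_post mm mp c c T S j \<le> c"
  shows "below_len mm mp c T S = arr T N" and "c < ws mm mp c c T S (arr T N)"
proof -
  have mono: "m < n \<Longrightarrow> arr T m < arr T n" for m n
    using arr_strict_mono T_pos by blast
  have greatest_N: "(GREATEST n. arr T n \<le> arr T N) = N"
  proof (rule Greatest_equality)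
    fix y assume "arr T y \<le> arr T N"
    then show "y \<le> N" using mono[of N y] by (cases "N < y") auto
  qed simp
  have "arr T 0 \<le> arr T N" using mono[of 0 N] by (cases N) auto
  then show at_exit: "c < ws mm mp c c T S (arr T N)"
    using exit unfolding ws_def greatest_N by (auto simp: Let_def)
  show "below_len mm mp c T S = arr T N"
    unfolding below_len_def
  proof (rule cInf_eq_minimum)
    show "arr T N \<in> {t. 0 < t \<and> c < ws mm mp c c T S t}"
      using at_exit arr_pos[OF T_pos] by simp
  next
    fix y assume "y \<in> {t. 0 < t \<and> c < ws mm mp c c T S t}"
    then show "arr T N \<le> y"
      using ws_le_before_first_exit[OF c T_pos below, where t = y] by force
  qed
qed

subsection \<open>Measurability of the below-period length\<close>

text \<open>For arbitrary (possibly non-positive) interarrival times the index in the definition of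
  \<^const>\<open>ws\<close> may be \<open>GREATEST\<close> of an unbounded predicate, whose value is this unspecified index.\<close>
definition unbounded_greatest :: nat where
  "unbounded_greatest = (GREATEST n::nat. False)"

lemma Greatest_unbounded:
  fixes P :: "nat \<Rightarrow> bool"
  assumes "\<And>n. P n \<Longrightarrow> \<exists>m>n. P m"
  shows "(GREATEST n. P n) = unbounded_greatest"
proof -
  have "(\<lambda>x. P x \<and> (\<forall>y. P y \<longrightarrow> y \<le> x)) = (\<lambda>x. False \<and> (\<forall>y. False \<longrightarrow> y \<le> x))"
    using assms by (fastforce simp: fun_eq_iff)
  then show ?thesis unfolding Greatest_def unbounded_greatest_def by simp
qed

lemma max_half_gt_iff:
  fixes c p a t :: real
  assumes "0 \<le> c"
  shows "c < max 0 (p - (t - a) / 2) \<longleftrightarrow> t < a + 2 * (p - c)"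
  using assms by (auto simp: max_def field_simps)

lemma ws_gt_iff_last_arrival:
  fixes T S :: "nat \<Rightarrow> real"
  assumes c: "0 \<le> c" and "arr T 0 \<le> t" and n: "arr T n \<le> t" "\<forall>m>n. t < arr T m"
  shows "c < ws mm mp c c T S t \<longleftrightarrow> t < arr T n + 2 * (ws_post mm mp c c T S n - c)"
proof -
  have "(GREATEST n. arr T n \<le> t) = n"
    by (rule Greatest_equality) (use n in \<open>auto simp: not_less[symmetric]\<close>)
  then show ?thesis
    using assms(2) unfolding ws_def by (simp add: Let_def max_half_gt_iff[OF c])
qed

lemma ws_gt_iff_unbounded_arrivals:
  fixes T S :: "nat \<Rightarrow> real"
  assumes c: "0 \<le> c" and "arr T 0 \<le> t" and unbounded: "\<And>n. arr T n \<le> t \<Longrightarrow> \<exists>m>n. arr T m \<le> t"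
  defines "g \<equiv> unbounded_greatest"
  shows "c < ws mm mp c c T S t \<longleftrightarrow> t < arr T g + 2 * (ws_post mm mp c c T S g - c)"
proof -
  have "(GREATEST n. arr T n \<le> t) = g"
    unfolding g_def by (rule Greatest_unbounded[OF unbounded])
  then show ?thesis
    using assms(2) unfolding ws_def by (simp add: Let_def max_half_gt_iff[OF c])
qed

lemma ws_gt_iff:
  fixes T S :: "nat \<Rightarrow> real"
  assumes c: "0 \<le> c" and t: "0 < t"
  defines "g \<equiv> unbounded_greatest"
  shows "c < ws mm mp c c T S t \<longleftrightarrow> arr T 0 \<le> t \<and>
     ((\<exists>n. arr T n \<le> t \<and> (\<forall>m>n. t < arr T m) \<and> t < arr T n + 2 * (ws_post mm mp c c T S n - c)) \<or>
      ((\<forall>N. \<exists>m\<ge>N. arr T m \<le> t) \<and> t < arr T g + 2 * (ws_post mm mp c c T S g - c)))"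
proof (cases "t < arr T 0")
  case True
  then show ?thesis using c t by (simp add: ws_def)
next
  case False
  then have t0: "arr T 0 \<le> t" by simp
  let ?P = "\<lambda>n. arr T n \<le> t"
  let ?exceeds = "\<lambda>n. t < arr T n + 2 * (ws_post mm mp c c T S n - c)"
  show ?thesis
  proof (cases "\<exists>n. ?P n \<and> (\<forall>m>n. t < arr T m)")
    case True
    then obtain n where n: "?P n" "\<forall>m>n. t < arr T m" by blast
    have "(\<exists>n'. ?P n' \<and> (\<forall>m>n'. t < arr T m) \<and> ?exceeds n') \<longleftrightarrow> ?exceeds n"
    proof
      assume "\<exists>n'. ?P n' \<and> (\<forall>m>n'. t < arr T m) \<and> ?exceeds n'"
      then obtain n' where "?P n'" "\<forall>m>n'. t < arr T m" "?exceeds n'" by blast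
      moreover have "n' = n"
        using n \<open>?P n'\<close> \<open>\<forall>m>n'. t < arr T m\<close> by (metis linorder_neqE_nat not_less)
      ultimately show "?exceeds n" by simp
    qed (use n in blast)
    moreover have "\<not> (\<forall>N. \<exists>m\<ge>N. arr T m \<le> t)"
      using n(2) by (metis Suc_le_eq not_less)
    ultimately show ?thesis
      using ws_gt_iff_last_arrival[OF c t0 n] t0 by blast
  next
    case no_last: False
    then have unbounded: "?P n \<Longrightarrow> \<exists>m>n. ?P m" for n by (auto simp: not_less)
    have "\<exists>m\<ge>N. ?P m" for N
    proof (induction N)
      case 0 then show ?case using t0 by (intro exI[of _ 0]) simp
    next
      case (Suc N)
      then obtain m where "N \<le> m" "?P m" by blast
      then obtain m' where "m < m'" "?P m'" using unbounded by blast
      then show ?case using \<open>N \<le> m\<close> by (intro exI[of _ m']) auto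
    qed
    then show ?thesis
      using ws_gt_iff_unbounded_arrivals[OF c t0 unbounded] no_last t0 unfolding g_def by blast
  qed
qed

text \<open>Countable reformulations of the real existentials arising from \<open>ws_gt_iff\<close>: a witness
  can be taken to be the least candidate \<open>max (A 0) (A n)\<close>, some \<open>1/(k+1)\<close>, or a rational.\<close>
definition exceeds_in_slot :: "(nat \<Rightarrow> real) \<Rightarrow> (nat \<Rightarrow> real) \<Rightarrow> nat \<Rightarrow> real \<Rightarrow> bool" where
  "exceeds_in_slot A b n x \<longleftrightarrow>
     (0 < max (A 0) (A n) \<and> max (A 0) (A n) < min x (b n) \<and> (\<forall>m>n. max (A 0) (A n) < A m)) \<or>
     (max (A 0) (A n) \<le> 0 \<and> (\<exists>k::nat. 1 / (real k + 1) < min x (b n) \<and> (\<forall>m>n. 1 / (real k + 1) < A m)))"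

definition exceeds_unbounded :: "(nat \<Rightarrow> real) \<Rightarrow> real \<Rightarrow> real \<Rightarrow> bool" where
  "exceeds_unbounded A g x \<longleftrightarrow> (\<exists>q::rat. 0 < real_of_rat q \<and> real_of_rat q < min x g \<and>
     A 0 \<le> real_of_rat q \<and> (\<forall>M. \<exists>m\<ge>M. A m \<le> real_of_rat q))"

lemma exceeds_in_slot_iff:
  "(\<exists>t. 0 < t \<and> t < x \<and> A 0 \<le> t \<and> A n \<le> t \<and> (\<forall>m>n. t < A m) \<and> t < b n) \<longleftrightarrow>
   exceeds_in_slot A b n x"
proof
  assume "\<exists>t. 0 < t \<and> t < x \<and> A 0 \<le> t \<and> A n \<le> t \<and> (\<forall>m>n. t < A m) \<and> t < b n"
  then obtain t where t: "0 < t" "t < x" "A 0 \<le> t" "A n \<le> t" "\<forall>m>n. t < A m" "t < b n"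
    by blast
  show "exceeds_in_slot A b n x"
  proof (cases "0 < max (A 0) (A n)")
    case True
    then show ?thesis using t unfolding exceeds_in_slot_def by (auto intro: le_less_trans)
  next
    case False
    obtain k :: nat where "1 / (real k + 1) < t"
      using reals_Archimedean[OF t(1)] by (auto simp: inverse_eq_divide add.commute)
    then have "1 / (real k + 1) < min x (b n)" "\<forall>m>n. 1 / (real k + 1) < A m"
      using t by auto
    then show ?thesis using False unfolding exceeds_in_slot_def by auto
  qed
next
  assume "exceeds_in_slot A b n x"
  then show "\<exists>t. 0 < t \<and> t < x \<and> A 0 \<le> t \<and> A n \<le> t \<and> (\<forall>m>n. t < A m) \<and> t < b n"
    unfolding exceeds_in_slot_def
  proof (elim disjE conjE exE)
    assume "0 < max (A 0) (A n)" "max (A 0) (A n) < min x (b n)" "\<forall>m>n. max (A 0) (A n) < A m"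
    then show ?thesis by (intro exI[of _ "max (A 0) (A n)"]) auto
  next
    fix k :: nat
    assume "max (A 0) (A n) \<le> 0" "1 / (real k + 1) < min x (b n)" "\<forall>m>n. 1 / (real k + 1) < A m"
    moreover have "0 < 1 / (real k + 1)" by simp
    ultimately show ?thesis
      by (intro exI[of _ "1 / (real k + 1)"]) (auto intro: order.trans[OF _ less_imp_le])
  qed
qed

lemma exceeds_unbounded_iff:
  "(\<exists>t. 0 < t \<and> t < x \<and> A 0 \<le> t \<and> (\<forall>M. \<exists>m\<ge>M. A m \<le> t) \<and> t < g) \<longleftrightarrow> exceeds_unbounded A g x"
proof
  assume "\<exists>t. 0 < t \<and> t < x \<and> A 0 \<le> t \<and> (\<forall>M. \<exists>m\<ge>M. A m \<le> t) \<and> t < g"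
  then obtain t where t: "0 < t" "t < x" "A 0 \<le> t" "\<forall>M. \<exists>m\<ge>M. A m \<le> t" "t < g" by blast
  then obtain q where q: "t < real_of_rat q" "real_of_rat q < min x g"
    using of_rat_dense[of t "min x g"] by auto
  have "\<forall>M. \<exists>m\<ge>M. A m \<le> real_of_rat q"
    using t(4) q(1) by (meson less_imp_le order_trans)
  moreover have "0 < real_of_rat q" "A 0 \<le> real_of_rat q"
    using t q by linarith+
  ultimately show "exceeds_unbounded A g x"
    unfolding exceeds_unbounded_def using q(2) by blast
next
  assume "exceeds_unbounded A g x"
  then show "\<exists>t. 0 < t \<and> t < x \<and> A 0 \<le> t \<and> (\<forall>M. \<exists>m\<ge>M. A m \<le> t) \<and> t < g"
    unfolding exceeds_unbounded_def
  proof (elim exE conjE)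
    fix q :: rat
    assume "0 < real_of_rat q" "real_of_rat q < min x g" "A 0 \<le> real_of_rat q"
      "\<forall>M. \<exists>m\<ge>M. A m \<le> real_of_rat q"
    then show ?thesis by (intro exI[of _ "real_of_rat q"]) simp
  qed
qed

lemma ex_ws_gt_iff:
  fixes T S :: "nat \<Rightarrow> real" and mm mp c :: real
  assumes c: "0 \<le> c"
  defines "b \<equiv> \<lambda>n. arr T n + 2 * (ws_post mm mp c c T S n - c)"
  shows "(\<exists>t. 0 < t \<and> t < x \<and> c < ws mm mp c c T S t) \<longleftrightarrow>
     (\<exists>n. exceeds_in_slot (arr T) b n x) \<or> exceeds_unbounded (arr T) (b unbounded_greatest) x"
proof -
  have distrib: "(\<exists>t. P1 t \<and> P2 t \<and> P3 t \<and> ((\<exists>n. Q n t) \<or> R t)) \<longleftrightarrow>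
      (\<exists>n t. P1 t \<and> P2 t \<and> P3 t \<and> Q n t) \<or> (\<exists>t. P1 t \<and> P2 t \<and> P3 t \<and> R t)"
    for P1 P2 P3 :: "real \<Rightarrow> bool" and Q :: "nat \<Rightarrow> real \<Rightarrow> bool" and R
    by blast
  have "(\<exists>t. 0 < t \<and> t < x \<and> c < ws mm mp c c T S t) \<longleftrightarrow>
    (\<exists>t. 0 < t \<and> t < x \<and> arr T 0 \<le> t \<and>
      ((\<exists>n. arr T n \<le> t \<and> (\<forall>m>n. t < arr T m) \<and> t < b n) \<or>
       ((\<forall>N. \<exists>m\<ge>N. arr T m \<le> t) \<and> t < b unbounded_greatest)))"
    unfolding b_def by (intro ex_cong1 conj_cong refl ws_gt_iff[OF c])
  also have "\<dots> \<longleftrightarrow>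
    (\<exists>n t. 0 < t \<and> t < x \<and> arr T 0 \<le> t \<and> arr T n \<le> t \<and> (\<forall>m>n. t < arr T m) \<and> t < b n) \<or>
    (\<exists>t. 0 < t \<and> t < x \<and> arr T 0 \<le> t \<and> (\<forall>N. \<exists>m\<ge>N. arr T m \<le> t) \<and> t < b unbounded_greatest)"
    by (rule distrib)
  also have "\<dots> \<longleftrightarrow> (\<exists>n. exceeds_in_slot (arr T) b n x) \<or> exceeds_unbounded (arr T) (b unbounded_greatest) x"
    by (simp add: exceeds_in_slot_iff[symmetric] exceeds_unbounded_iff[symmetric])
  finally show ?thesis .
qed

lemma measurable_arr[measurable]:
  assumes [measurable]: "\<And>i. T i \<in> borel_measurable N"
  shows "(\<lambda>\<omega>. arr (\<lambda>i. T i \<omega>) n) \<in> borel_measurable N"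
  unfolding arr_def by measurable

lemma measurable_ws_post[measurable]:
  assumes [measurable]: "\<And>i. T i \<in> borel_measurable N" "\<And>i. S i \<in> borel_measurable N"
  shows "(\<lambda>\<omega>. ws_post mm mp c w0 (\<lambda>i. T i \<omega>) (\<lambda>i. S i \<omega>) n) \<in> borel_measurable N"
proof (induction n)
  case 0 show ?case by (simp add: Let_def to_short_def) measurable
next
  case (Suc n)
  note [measurable] = Suc
  show ?case by (simp add: Let_def to_short_def) measurable
qed

lemma Inf_less_iff_witness:
  fixes E :: "real set"
  assumes pos: "\<And>t. t \<in> E \<Longrightarrow> 0 < t"
  shows "Inf E < x \<longleftrightarrow>
    ((\<exists>k::nat. \<exists>t\<in>E. t < real k) \<and> (\<exists>t\<in>E. t < x)) \<or> (\<not> (\<exists>k::nat. \<exists>t\<in>E. t < real k) \<and> Inf ({}::real set) < x)"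
proof (cases "E = {}")
  case False
  then obtain t k where "t \<in> E" "t < real k"
    using reals_Archimedean2 by blast
  moreover have "bdd_below E" by (rule bdd_belowI[of _ 0]) (use pos in \<open>auto intro: less_imp_le\<close>)
  ultimately show ?thesis using False cInf_less_iff[of E x] by blast
qed simp

lemma measurable_below_len[measurable]:
  assumes [measurable]: "\<And>i. T i \<in> borel_measurable N" "\<And>i. S i \<in> borel_measurable N"
    and c: "0 \<le> c"
  shows "(\<lambda>\<omega>. below_len mm mp c (\<lambda>i. T i \<omega>) (\<lambda>i. S i \<omega>)) \<in> borel_measurable N"
proof -
  define A where "A \<omega> = arr (\<lambda>i. T i \<omega>)" for \<omega>
  define b where "b \<omega> n = A \<omega> n + 2 * (ws_post mm mp c c (\<lambda>i. T i \<omega>) (\<lambda>i. S i \<omega>) n - c)" for \<omega> n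
  define R where "R \<omega> x \<longleftrightarrow>
    (\<exists>n. exceeds_in_slot (A \<omega>) (b \<omega>) n x) \<or> exceeds_unbounded (A \<omega>) (b \<omega> unbounded_greatest) x"
    for \<omega> x
  define E where "E \<omega> = {t. 0 < t \<and> c < ws mm mp c c (\<lambda>i. T i \<omega>) (\<lambda>i. S i \<omega>) t}" for \<omega>
  have E_less: "(\<exists>t\<in>E \<omega>. t < x) \<longleftrightarrow> R \<omega> x" for \<omega> x
  proof -
    have "(\<exists>t\<in>E \<omega>. t < x) \<longleftrightarrow> (\<exists>t. 0 < t \<and> t < x \<and> c < ws mm mp c c (\<lambda>i. T i \<omega>) (\<lambda>i. S i \<omega>) t)"
      unfolding E_def by auto
    also have "\<dots> \<longleftrightarrow> R \<omega> x"
      unfolding R_def A_def b_def by (rule ex_ws_gt_iff[OF c])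
    finally show ?thesis .
  qed
  have below_len_less: "below_len mm mp c (\<lambda>i. T i \<omega>) (\<lambda>i. S i \<omega>) < x \<longleftrightarrow>
      ((\<exists>k::nat. R \<omega> (real k)) \<and> R \<omega> x) \<or> (\<not> (\<exists>k::nat. R \<omega> (real k)) \<and> Inf ({}::real set) < x)"
    for \<omega> x
    unfolding below_len_def E_def[symmetric] E_less[symmetric]
    by (rule Inf_less_iff_witness) (simp add: E_def)
  have [measurable]: "(\<lambda>\<omega>. A \<omega> n) \<in> borel_measurable N" for n
    unfolding A_def by measurable
  have [measurable]: "(\<lambda>\<omega>. b \<omega> n) \<in> borel_measurable N" for n
    unfolding b_def by measurable
  have [measurable]: "Measurable.pred N (\<lambda>\<omega>. R \<omega> x)" for x
    unfolding R_def exceeds_in_slot_def exceeds_unbounded_def by measurable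
  show ?thesis
    unfolding borel_measurable_iff_less
  proof
    fix x
    have "{\<omega> \<in> space N. below_len mm mp c (\<lambda>i. T i \<omega>) (\<lambda>i. S i \<omega>) < x} =
      {\<omega> \<in> space N. ((\<exists>k::nat. R \<omega> (real k)) \<and> R \<omega> x) \<or>
        (\<not> (\<exists>k::nat. R \<omega> (real k)) \<and> Inf ({}::real set) < x)}"
      by (simp only: below_len_less)
    also have "\<dots> \<in> sets N" by measurable
    finally show "{\<omega> \<in> space N. below_len mm mp c (\<lambda>i. T i \<omega>) (\<lambda>i. S i \<omega>) < x} \<in> sets N" .
  qed
qed

section \<open>Excess distributions and bounded mean residual life\<close>

lemma borel_measurable_measure_greaterThan:
  assumes "finite_measure \<mu>" and sets: "sets \<mu> = sets (borel :: real measure)"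
  shows "(\<lambda>s. measure \<mu> {s<..}) \<in> borel_measurable borel"
proof -
  interpret finite_measure \<mu> by fact
  have "mono (\<lambda>s. - measure \<mu> {s<..})"
  proof (rule monoI)
    fix s s' :: real assume "s \<le> s'"
    then have "measure \<mu> {s'<..} \<le> measure \<mu> {s<..}"
      using sets by (intro finite_measure_mono) auto
    then show "- measure \<mu> {s<..} \<le> - measure \<mu> {s'<..}" by simp
  qed
  then have "(\<lambda>s. - measure \<mu> {s<..}) \<in> borel_measurable borel"
    by (rule borel_measurable_mono)
  then have "(\<lambda>s. - (- measure \<mu> {s<..})) \<in> borel_measurable borel"
    by measurable
  then show ?thesis by simp
qed

lemma nn_integral_tail_eq_residual:
  assumes "finite_measure \<mu>" and sets: "sets \<mu> = sets (borel :: real measure)"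
  shows "(\<integral>\<^sup>+s. indicator {r<..} s * ennreal (measure \<mu> {s<..}) \<partial>lborel) =
    (\<integral>\<^sup>+x. ennreal (x - r) \<partial>\<mu>)"
proof -
  interpret finite_measure \<mu> by fact
  interpret pair_sigma_finite lborel \<mu> ..
  have [measurable]: "Measurable.pred (lborel \<Otimes>\<^sub>M \<mu>) (\<lambda>(s, x). r < s \<and> s < x)"
    by (simp add: measurable_cong_sets[OF sets_pair_measure_cong[OF refl sets] refl])
  have "(\<integral>\<^sup>+s. indicator {r<..} s * ennreal (measure \<mu> {s<..}) \<partial>lborel) =
        (\<integral>\<^sup>+s. (\<integral>\<^sup>+x. indicator {s. r < s \<and> s < x} s \<partial>\<mu>) \<partial>lborel)"
  proof (intro nn_integral_cong)
    fix s :: real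
    have "ennreal (measure \<mu> {s<..}) = emeasure \<mu> {s<..}"
      using sets by (simp add: emeasure_eq_measure)
    also have "\<dots> = (\<integral>\<^sup>+x. indicator {s<..} x \<partial>\<mu>)"
      using sets by (simp add: nn_integral_indicator)
    finally show "indicator {r<..} s * ennreal (measure \<mu> {s<..}) =
        (\<integral>\<^sup>+x. indicator {s. r < s \<and> s < x} s \<partial>\<mu>)"
      by (cases "r < s") (auto simp: indicator_def)
  qed
  also have "\<dots> = (\<integral>\<^sup>+x. (\<integral>\<^sup>+s. indicator {s. r < s \<and> s < x} s \<partial>lborel) \<partial>\<mu>)"
    by (rule Fubini'[where f = "\<lambda>s x. indicator {s. r < s \<and> s < x} s", symmetric])
      (simp add: indicator_def)
  also have "\<dots> = (\<integral>\<^sup>+x. ennreal (x - r) \<partial>\<mu>)"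
  proof (intro nn_integral_cong)
    fix x :: real
    have "{s. r < s \<and> s < x} = {r<..<x}" by auto
    then show "(\<integral>\<^sup>+s. indicator {s. r < s \<and> s < x} s \<partial>lborel) = ennreal (x - r)"
      by (cases "r \<le> x") (auto simp: ennreal_neg)
  qed
  finally show ?thesis .
qed

lemma nn_integral_ramp_eq_iterated:
  assumes [measurable]: "h \<in> borel_measurable borel"
  shows "(\<integral>\<^sup>+s. h s * ennreal (s - t) \<partial>lborel) =
    (\<integral>\<^sup>+r. indicator {t<..} r * (\<integral>\<^sup>+s. indicator {r<..} s * h s \<partial>lborel) \<partial>lborel)"
proof -
  have "(\<integral>\<^sup>+s. h s * ennreal (s - t) \<partial>lborel) =
      (\<integral>\<^sup>+s. (\<integral>\<^sup>+r. h s * indicator {r. t < r \<and> r < s} r \<partial>lborel) \<partial>lborel)"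
  proof (intro nn_integral_cong)
    fix s :: real
    have "{r. t < r \<and> r < s} = {t<..<s}" by auto
    then have "(\<integral>\<^sup>+r. h s * indicator {r. t < r \<and> r < s} r \<partial>lborel) = h s * emeasure lborel {t<..<s}"
      by (simp add: nn_integral_cmult_indicator)
    also have "\<dots> = h s * ennreal (s - t)" by (cases "t \<le> s") (auto simp: ennreal_neg)
    finally show "h s * ennreal (s - t) = (\<integral>\<^sup>+r. h s * indicator {r. t < r \<and> r < s} r \<partial>lborel)"
      by simp
  qed
  also have "\<dots> = (\<integral>\<^sup>+r. (\<integral>\<^sup>+s. h s * indicator {r. t < r \<and> r < s} r \<partial>lborel) \<partial>lborel)"
    by (rule lborel_pair.Fubini') (simp add: indicator_def)
  also have "\<dots> = (\<integral>\<^sup>+r. indicator {t<..} r * (\<integral>\<^sup>+s. indicator {r<..} s * h s \<partial>lborel) \<partial>lborel)"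
  proof (intro nn_integral_cong)
    fix r :: real
    show "(\<integral>\<^sup>+s. h s * indicator {r. t < r \<and> r < s} r \<partial>lborel) =
        indicator {t<..} r * (\<integral>\<^sup>+s. indicator {r<..} s * h s \<partial>lborel)"
      by (cases "t < r") (auto simp: indicator_def intro!: nn_integral_cong)
  qed
  finally show ?thesis .
qed

definition excess_density :: "real measure \<Rightarrow> real \<Rightarrow> ennreal" where
  "excess_density \<mu> s = ennreal (indicator {0..} s * measure \<mu> {s<..} / (\<integral>x. x \<partial>\<mu>))"

lemma excess_eq_density: "excess \<mu> = density lborel (excess_density \<mu>)"
  unfolding excess_def excess_density_def ..

lemma sets_excess[simp, measurable_cong]: "sets (excess \<mu>) = sets borel"
  by (simp add: excess_def)

lemma borel_measurable_excess_density[measurable]: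
  assumes "finite_measure \<mu>" and "sets \<mu> = sets borel"
  shows "excess_density \<mu> \<in> borel_measurable borel"
  using borel_measurable_measure_greaterThan[OF assms]
  unfolding excess_density_def by measurable

lemma AE_excess_pos:
  assumes "finite_measure \<mu>" and "sets \<mu> = sets borel"
  shows "AE x in excess \<mu>. 0 < x"
proof -
  have "AE s in lborel. 0 < excess_density \<mu> s \<longrightarrow> 0 < s"
    using AE_lborel_singleton[of 0] by eventually_elim (auto simp: excess_density_def indicator_def)
  then show ?thesis
    unfolding excess_eq_density using borel_measurable_excess_density[OF assms]
    by (subst AE_density) auto
qed

context
  fixes \<mu> :: "real measure"
  assumes prob: "prob_space \<mu>" and sets: "sets \<mu> = sets borel"
    and nonneg: "AE x in \<mu>. 0 \<le> x" and int: "integrable \<mu> (\<lambda>x. x)"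
    and mean_pos: "0 < (\<integral>x. x \<partial>\<mu>)"
begin

interpretation prob_space \<mu> by (rule prob)

lemma excess_density_nonneg:
  assumes "0 \<le> s"
  shows "excess_density \<mu> s = ennreal (1 / (\<integral>x. x \<partial>\<mu>)) * ennreal (measure \<mu> {s<..})"
  using assms mean_pos unfolding excess_density_def by (simp add: ennreal_mult[symmetric] mult.commute)

lemma nn_integral_excess_density_above:
  assumes r: "0 \<le> r"
  shows "(\<integral>\<^sup>+s. indicator {r<..} s * excess_density \<mu> s \<partial>lborel) =
    ennreal (1 / (\<integral>x. x \<partial>\<mu>)) * (\<integral>\<^sup>+x. ennreal (x - r) \<partial>\<mu>)"
proof -
  have tail[measurable]: "(\<lambda>s. measure \<mu> {s<..}) \<in> borel_measurable borel"
    by (rule borel_measurable_measure_greaterThan[OF finite_measure_axioms sets])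
  have "(\<integral>\<^sup>+s. indicator {r<..} s * excess_density \<mu> s \<partial>lborel) =
      (\<integral>\<^sup>+s. ennreal (1 / (\<integral>x. x \<partial>\<mu>)) * (indicator {r<..} s * ennreal (measure \<mu> {s<..})) \<partial>lborel)"
    using r by (intro nn_integral_cong) (auto simp: indicator_def excess_density_nonneg)
  also have "\<dots> = ennreal (1 / (\<integral>x. x \<partial>\<mu>)) * (\<integral>\<^sup>+x. ennreal (x - r) \<partial>\<mu>)"
    by (simp add: nn_integral_cmult nn_integral_tail_eq_residual[OF finite_measure_axioms sets])
  finally show ?thesis .
qed

lemma prob_space_excess: "prob_space (excess \<mu>)"
proof (rule prob_spaceI)
  have "(\<integral>\<^sup>+s. excess_density \<mu> s \<partial>lborel) = (\<integral>\<^sup>+s. indicator {0<..} s * excess_density \<mu> s \<partial>lborel)"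
  proof (rule nn_integral_cong_AE)
    show "AE s in lborel. excess_density \<mu> s = indicator {0<..} s * excess_density \<mu> s"
      using AE_lborel_singleton[of 0]
      by eventually_elim (auto simp: excess_density_def indicator_def)
  qed
  also have "\<dots> = ennreal (1 / (\<integral>x. x \<partial>\<mu>)) * ennreal (\<integral>x. x \<partial>\<mu>)"
    using int nonneg by (simp add: nn_integral_excess_density_above nn_integral_eq_integral)
  also have "\<dots> = 1"
    using mean_pos by (simp add: ennreal_mult[symmetric])
  finally show "emeasure (excess \<mu>) (space (excess \<mu>)) = 1"
    using borel_measurable_excess_density[OF finite_measure_axioms sets]
    by (simp add: excess_eq_density emeasure_density)
qed

lemma nn_integral_excess_residual_le:
  assumes resid: "\<And>t. 0 \<le> t \<Longrightarrow> (\<integral>\<^sup>+x. ennreal (x - t) \<partial>\<mu>) \<le> ennreal K * emeasure \<mu> {t<..}"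
    and t: "0 \<le> t"
  shows "(\<integral>\<^sup>+x. ennreal (x - t) \<partial>excess \<mu>) \<le> ennreal K * emeasure (excess \<mu>) {t<..}"
proof -
  let ?f = "excess_density \<mu>"
  have [measurable]: "?f \<in> borel_measurable borel"
    by (rule borel_measurable_excess_density[OF finite_measure_axioms sets])
  text \<open>The excess density at \<open>r\<close> is proportional to the tail of \<open>\<mu>\<close> at \<open>r\<close>, so the residual
    bound for \<open>\<mu>\<close> says that the tail integral of the density above \<open>r\<close> is at most \<open>K\<close> times the
    density at \<open>r\<close>.\<close>
  have above: "(\<integral>\<^sup>+s. indicator {r<..} s * ?f s \<partial>lborel) \<le> ennreal K * ?f r" if r: "0 \<le> r" for r
  proof -
    have "(\<integral>\<^sup>+s. indicator {r<..} s * ?f s \<partial>lborel) \<le>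
        ennreal (1 / (\<integral>x. x \<partial>\<mu>)) * (ennreal K * emeasure \<mu> {r<..})"
      unfolding nn_integral_excess_density_above[OF r] by (intro mult_left_mono resid r) simp
    also have "\<dots> = ennreal K * ?f r"
      using r sets by (simp add: excess_density_nonneg emeasure_eq_measure ac_simps)
    finally show ?thesis .
  qed
  have "(\<integral>\<^sup>+x. ennreal (x - t) \<partial>excess \<mu>) = (\<integral>\<^sup>+s. ?f s * ennreal (s - t) \<partial>lborel)"
    unfolding excess_eq_density by (simp add: nn_integral_density)
  also have "\<dots> = (\<integral>\<^sup>+r. indicator {t<..} r * (\<integral>\<^sup>+s. indicator {r<..} s * ?f s \<partial>lborel) \<partial>lborel)"
    by (rule nn_integral_ramp_eq_iterated) measurable
  also have "\<dots> \<le> (\<integral>\<^sup>+r. ennreal K * (?f r * indicator {t<..} r) \<partial>lborel)"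
    using above t by (intro nn_integral_mono) (auto simp: indicator_def)
  also have "\<dots> = ennreal K * emeasure (excess \<mu>) {t<..}"
    unfolding excess_eq_density by (simp add: nn_integral_cmult emeasure_density)
  finally show ?thesis .
qed

end

text \<open>\<open>\<mu>\<close> is the law of a positive random variable \<open>V\<close> with \<open>E[(V - t)\<^sup>+] \<le> K P(V > t)\<close>, i.e. mean
  residual life \<open>E[V - t | V > t] \<le> K\<close>, for all \<open>t \<ge> 0\<close> (\<^const>\<open>ennreal\<close> truncates \<open>x - t\<close> at \<open>0\<close>).\<close>
definition mean_residual_bounded :: "real \<Rightarrow> real measure \<Rightarrow> bool" where
  "mean_residual_bounded K \<mu> \<longleftrightarrow> prob_space \<mu> \<and> sets \<mu> = sets borel \<and> (AE x in \<mu>. 0 < x) \<and>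
     (\<forall>t\<ge>0. (\<integral>\<^sup>+x. ennreal (x - t) \<partial>\<mu>) \<le> ennreal K * emeasure \<mu> {t<..})"

lemma mean_residual_boundedD:
  assumes "mean_residual_bounded K \<mu>"
  shows "prob_space \<mu>" and "sets \<mu> = sets borel" and "AE x in \<mu>. 0 < x"
    and "\<And>t. 0 \<le> t \<Longrightarrow> (\<integral>\<^sup>+x. ennreal (x - t) \<partial>\<mu>) \<le> ennreal K * emeasure \<mu> {t<..}"
  using assms by (auto simp: mean_residual_bounded_def)

lemma mean_residual_bounded_AE_nonneg:
  assumes "mean_residual_bounded K \<mu>"
  shows "AE x in \<mu>. 0 \<le> x"
  using mean_residual_boundedD(3)[OF assms] by eventually_elim simp

lemma mean_residual_bounded_measurable_id:
  assumes "mean_residual_bounded K \<mu>"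
  shows "(\<lambda>x. x) \<in> borel_measurable \<mu>"
  by (subst measurable_cong_sets[OF mean_residual_boundedD(2)[OF assms] refl]) simp

lemma mean_residual_bounded_nn_integral_le:
  assumes "mean_residual_bounded K \<mu>"
  shows "(\<integral>\<^sup>+x. ennreal x \<partial>\<mu>) \<le> ennreal K"
proof -
  interpret prob_space \<mu> by (rule mean_residual_boundedD(1)[OF assms])
  have "(\<integral>\<^sup>+x. ennreal (x - 0) \<partial>\<mu>) \<le> ennreal K * emeasure \<mu> {0<..}"
    by (rule mean_residual_boundedD(4)[OF assms]) simp
  also have "\<dots> \<le> ennreal K * 1"
    by (intro mult_left_mono emeasure_le_1) simp
  finally show ?thesis by simp
qed

lemma mean_residual_bounded_integrable:
  assumes "mean_residual_bounded K \<mu>"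
  shows "integrable \<mu> (\<lambda>x. x)"
  using mean_residual_bounded_measurable_id[OF assms] mean_residual_bounded_AE_nonneg[OF assms]
proof (rule integrableI_nonneg)
  show "(\<integral>\<^sup>+x. ennreal x \<partial>\<mu>) < \<infinity>"
    using mean_residual_bounded_nn_integral_le[OF assms] by (rule le_less_trans) simp
qed

lemma mean_residual_bounded_mean_pos:
  assumes "mean_residual_bounded K \<mu>"
  shows "0 < (\<integral>x. x \<partial>\<mu>)"
proof -
  interpret prob_space \<mu> by (rule mean_residual_boundedD(1)[OF assms])
  note pos = mean_residual_boundedD(3)[OF assms]
  note nonneg = mean_residual_bounded_AE_nonneg[OF assms]
  have "(\<integral>x. x \<partial>\<mu>) \<noteq> 0"
  proof
    assume "(\<integral>x. x \<partial>\<mu>) = 0"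
    then have "AE x in \<mu>. x = 0"
      using integral_nonneg_eq_0_iff_AE[OF mean_residual_bounded_integrable[OF assms] nonneg] by simp
    with pos have "AE x in \<mu>. False" by eventually_elim simp
    then show False by simp
  qed
  moreover have "0 \<le> (\<integral>x. x \<partial>\<mu>)" using nonneg by (rule integral_nonneg_AE)
  ultimately show ?thesis by simp
qed

lemma mean_residual_bounded_mean_le:
  assumes "mean_residual_bounded K \<mu>"
  shows "(\<integral>x. x \<partial>\<mu>) \<le> K"
proof -
  note nonneg = mean_residual_bounded_AE_nonneg[OF assms]
  have mean: "(\<integral>\<^sup>+x. ennreal x \<partial>\<mu>) = ennreal (\<integral>x. x \<partial>\<mu>)"
    by (rule nn_integral_eq_integral[OF mean_residual_bounded_integrable[OF assms] nonneg])
  have le: "ennreal (\<integral>x. x \<partial>\<mu>) \<le> ennreal K"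
    using mean_residual_bounded_nn_integral_le[OF assms] unfolding mean .
  have "0 < ennreal (\<integral>x. x \<partial>\<mu>)"
    using mean_residual_bounded_mean_pos[OF assms] by simp
  then have "0 < ennreal K" using le by (rule less_le_trans)
  then have "0 \<le> K" by simp
  with le show ?thesis by (simp add: ennreal_le_iff)
qed

lemma mean_residual_bounded_excess:
  assumes "mean_residual_bounded K \<mu>"
  shows "mean_residual_bounded K (excess \<mu>)"
proof -
  note prob = mean_residual_boundedD(1)[OF assms] and sets = mean_residual_boundedD(2)[OF assms]
  note facts = prob sets mean_residual_bounded_AE_nonneg[OF assms] mean_residual_bounded_integrable[OF assms]
    mean_residual_bounded_mean_pos[OF assms]
  interpret prob_space \<mu> by (rule prob)
  show ?thesis
    unfolding mean_residual_bounded_def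
  proof (intro conjI allI impI)
    show "prob_space (excess \<mu>)" by (rule prob_space_excess[OF facts])
    show "AE x in excess \<mu>. 0 < x" by (rule AE_excess_pos[OF finite_measure_axioms sets])
    fix t :: real assume "0 \<le> t"
    then show "(\<integral>\<^sup>+x. ennreal (x - t) \<partial>excess \<mu>) \<le> ennreal K * emeasure (excess \<mu>) {t<..}"
      using nn_integral_excess_residual_le[OF facts, of K t] mean_residual_boundedD(4)[OF assms]
      by blast
  qed simp
qed

section \<open>The embedded chain of the below period\<close>

text \<open>An arrival is encoded as \<open>x = (\<tau>, s)\<close>: the interarrival time before it and its job size.\<close>
definition short_step :: "real \<Rightarrow> real \<Rightarrow> real \<Rightarrow> real \<Rightarrow> real \<times> real \<Rightarrow> real" where
  "short_step mm mp c u x =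
    (let w = max 0 (u - fst x / 2) in w + (if to_short mm mp c w (snd x) then snd x else 0))"

text \<open>\<open>below_sum f k u xs\<close> sums \<open>f\<close> over the arrivals of a below period started at workload \<open>u\<close>,
  up to and including the arrival that ends it, but over at most \<open>k\<close> arrivals.\<close>
primrec below_sum ::
    "real \<Rightarrow> real \<Rightarrow> real \<Rightarrow> (real \<times> real \<Rightarrow> ennreal) \<Rightarrow> nat \<Rightarrow> real \<Rightarrow> (real \<times> real) stream \<Rightarrow> ennreal"
where
  "below_sum mm mp c f 0 u xs = 0"
| "below_sum mm mp c f (Suc k) u xs = f (shd xs) +
     (if c < short_step mm mp c u (shd xs) then 0
      else below_sum mm mp c f k (short_step mm mp c u (shd xs)) (stl xs))"

lemma below_sum_0_fun [simp]: "below_sum mm mp c f 0 u = (\<lambda>_. 0)"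
  by (rule ext) simp

lemma below_sum_Suc_Stream [simp]:
  "below_sum mm mp c f (Suc k) u (x ## xs) = f x +
     (if c < short_step mm mp c u x then 0 else below_sum mm mp c f k (short_step mm mp c u x) xs)"
  by simp

abbreviation ws_post_stream :: "real \<Rightarrow> real \<Rightarrow> real \<Rightarrow> real \<Rightarrow> (real \<times> real) stream \<Rightarrow> nat \<Rightarrow> real" where
  "ws_post_stream mm mp c u xs \<equiv> ws_post mm mp c u (\<lambda>i. fst (xs !! i)) (\<lambda>i. snd (xs !! i))"

lemma ws_post_0_eq_short_step: "ws_post mm mp c u T S 0 = short_step mm mp c u (T 0, S 0)"
  by (simp add: short_step_def Let_def)

lemma ws_post_stream_0: "ws_post_stream mm mp c u xs 0 = short_step mm mp c u (shd xs)"
  by (simp only: ws_post_0_eq_short_step snth.simps prod.collapse)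

lemma ws_post_Suc_shift:
  "ws_post mm mp c u T S (Suc n) =
    ws_post mm mp c (short_step mm mp c u (T 0, S 0)) (\<lambda>i. T (Suc i)) (\<lambda>i. S (Suc i)) n"
proof (induction n)
  case 0 then show ?case by (simp add: short_step_def Let_def)
next
  case (Suc n)
  have "ws_post mm mp c u T S (Suc (Suc n)) =
      short_step mm mp c (ws_post mm mp c u T S (Suc n)) (T (Suc (Suc n)), S (Suc (Suc n)))"
    by (simp only: ws_post.simps short_step_def Let_def fst_conv snd_conv)
  also have "\<dots> = ws_post mm mp c (short_step mm mp c u (T 0, S 0)) (\<lambda>i. T (Suc i)) (\<lambda>i. S (Suc i)) (Suc n)"
    unfolding Suc by (simp only: ws_post.simps short_step_def Let_def fst_conv snd_conv)
  finally show ?case .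
qed

lemma ws_post_stream_Suc:
  "ws_post_stream mm mp c u xs (Suc n) = ws_post_stream mm mp c (short_step mm mp c u (shd xs)) (stl xs) n"
  by (simp only: ws_post_Suc_shift snth.simps prod.collapse)

lemma below_sum_no_exit:
  "(\<forall>j<k. ws_post_stream mm mp c u xs j \<le> c) \<Longrightarrow> below_sum mm mp c f k u xs = (\<Sum>i<k. f (xs !! i))"
proof (induction k arbitrary: u xs)
  case (Suc k)
  have "\<not> c < short_step mm mp c u (shd xs)"
    using Suc.prems[rule_format, of 0] unfolding ws_post_stream_0 by simp
  moreover have "\<forall>j<k. ws_post_stream mm mp c (short_step mm mp c u (shd xs)) (stl xs) j \<le> c"
    using Suc.prems by (auto simp: ws_post_stream_Suc[symmetric])
  ultimately show ?case
    using Suc.IH by (simp add: sum.lessThan_Suc_shift del: sum.lessThan_Suc)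
qed simp

lemma below_sum_exit:
  "N < k \<Longrightarrow> c < ws_post_stream mm mp c u xs N \<Longrightarrow> (\<forall>j<N. ws_post_stream mm mp c u xs j \<le> c) \<Longrightarrow>
   below_sum mm mp c f k u xs = (\<Sum>i<Suc N. f (xs !! i))"
proof (induction k arbitrary: u xs N)
  case (Suc k)
  show ?case
  proof (cases N)
    case 0
    then have "c < ws_post_stream mm mp c u xs 0"
      using Suc.prems(2) by (simp only:)
    then have "c < short_step mm mp c u (shd xs)"
      unfolding ws_post_stream_0 .
    then show ?thesis using 0 by simp
  next
    case (Suc N')
    have "\<not> c < short_step mm mp c u (shd xs)"
      using Suc.prems(3)[rule_format, of 0] Suc unfolding ws_post_stream_0 by simp
    moreover have "below_sum mm mp c f k (short_step mm mp c u (shd xs)) (stl xs) =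
        (\<Sum>i<Suc N'. f (stl xs !! i))"
      using Suc.prems Suc by (intro Suc.IH) (auto simp: ws_post_stream_Suc[symmetric])
    ultimately show ?thesis
      using Suc by (simp add: sum.lessThan_Suc_shift[of _ "Suc N'"] del: sum.lessThan_Suc)
  qed
qed simp

lemma below_sum_mono_Suc: "below_sum mm mp c f k u xs \<le> below_sum mm mp c f (Suc k) u xs"
proof (induction k arbitrary: u xs)
  case (Suc k)
  then show ?case
    using Suc.IH[of "short_step mm mp c u (shd xs)" "stl xs"] by (auto intro: add_left_mono)
qed simp

lemma incseq_below_sum: "incseq (\<lambda>k. below_sum mm mp c f k u xs)"
  by (rule incseq_SucI) (rule below_sum_mono_Suc)

lemma SUP_eventually_const:
  fixes g :: "nat \<Rightarrow> 'a::complete_lattice"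
  assumes "incseq g" and "\<And>k. m \<le> k \<Longrightarrow> g k = L"
  shows "(SUP k. g k) = L"
proof (rule antisym)
  show "(SUP k. g k) \<le> L"
  proof (rule SUP_least)
    fix k
    have "g k \<le> g (max k m)" using assms(1) by (simp add: incseq_def)
    then show "g k \<le> L" using assms(2) by simp
  qed
  show "L \<le> (SUP k. g k)"
    using assms(2)[of m] SUP_upper[of m UNIV g] by simp
qed

lemma measurable_short_step[measurable]:
  "(\<lambda>p. short_step mm mp c (fst p) (snd p)) \<in> borel_measurable (borel \<Otimes>\<^sub>M (borel \<Otimes>\<^sub>M borel))"
  unfolding short_step_def to_short_def Let_def by measurable

lemma measurable_below_sum:
  assumes sD: "sets D = sets (borel \<Otimes>\<^sub>M borel)" and f[measurable]: "f \<in> borel_measurable D"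
  shows "(\<lambda>p. below_sum mm mp c f k (fst p) (snd p)) \<in> borel_measurable (borel \<Otimes>\<^sub>M stream_space D)"
proof (induction k)
  case (Suc k)
  have "(\<lambda>p. (fst p, shd (snd p))) \<in> measurable (borel \<Otimes>\<^sub>M stream_space D) (borel \<Otimes>\<^sub>M (borel \<Otimes>\<^sub>M borel))"
    by (subst measurable_cong_sets[OF refl sets_pair_measure_cong[OF refl sD[symmetric]]]) measurable
  from measurable_compose[OF this measurable_short_step]
  have step[measurable]: "(\<lambda>p. short_step mm mp c (fst p) (shd (snd p))) \<in> borel_measurable (borel \<Otimes>\<^sub>M stream_space D)"
    by simp
  have "(\<lambda>p. (short_step mm mp c (fst p) (shd (snd p)), stl (snd p))) \<in>
      measurable (borel \<Otimes>\<^sub>M stream_space D) (borel \<Otimes>\<^sub>M stream_space D)"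
    by measurable
  from measurable_compose[OF this Suc]
  have "(\<lambda>p. below_sum mm mp c f k (short_step mm mp c (fst p) (shd (snd p))) (stl (snd p))) \<in>
      borel_measurable (borel \<Otimes>\<^sub>M stream_space D)"
    by simp
  then show ?case by simp measurable
qed simp

lemma ennreal_plus_minus_le:
  assumes "0 \<le> t" "t \<le> a"
  shows "ennreal a + R - ennreal t = ennreal (a - t) + R"
proof -
  have "ennreal a + R - ennreal t = (ennreal (a - t) + R) + ennreal t - ennreal t"
    using assms by (simp add: ennreal_plus[symmetric] ac_simps)
  also have "\<dots> = ennreal (a - t) + R" by (rule ennreal_add_diff_cancel_right) simp
  finally show ?thesis .
qed

lemma ennreal_plus_minus_ge:
  assumes "0 \<le> a" "a \<le> t"
  shows "ennreal a + R - ennreal t = R - ennreal (t - a)"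
proof (cases R)
  case (real r)
  then show ?thesis
    using assms by (simp add: ennreal_plus[symmetric] ennreal_minus del: ennreal_plus) (simp add: algebra_simps)
qed simp

lemma ennreal_less_plus_iff:
  assumes "0 \<le> a" "a \<le> t"
  shows "ennreal t < ennreal a + R \<longleftrightarrow> ennreal (t - a) < R"
proof (cases R)
  case (real r)
  then show ?thesis
    using assms by (simp add: ennreal_plus[symmetric] ennreal_less_iff del: ennreal_plus) linarith
qed simp

section \<open>Drift of the below period\<close>

text \<open>\<open>ES\<close> is the job-size law and \<open>\<beta> = \<rho>\<^sub>s + \<rho>\<^sub>m - 1/2\<close>: \<open>\<beta> + 1/2\<close> is the load of the jobs of size below
  \<open>m\<^sub>+\<close>, all of which join the short server while its workload is at most \<open>c\<close>.\<close>
locale card_below =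
  fixes lam mm mp c \<beta> :: real and ES :: "real measure"
  assumes lam: "0 < lam" and ES: "prob_space ES" and sets_ES[measurable_cong]: "sets ES = sets borel"
    and params: "0 \<le> mm" "mm \<le> mp" "mp \<le> c"
    and beta: "0 < \<beta>" and integrable_below_work: "integrable ES (\<lambda>s. s * indicator {..<mp} s)"
    and mean_below_work: "lam * (\<integral>s. s * indicator {..<mp} s \<partial>ES) - 1/2 = \<beta>"
begin

definition ET :: "real measure" where
  "ET = density lborel (\<lambda>x. ennreal (exponential_density lam x))"

definition arrival :: "(real \<times> real) measure" where
  "arrival = ET \<Otimes>\<^sub>M ES"

definition arrivals :: "(real \<times> real) stream measure" where
  "arrivals = stream_space arrival"

lemma sets_ET[measurable_cong]: "sets ET = sets borel"
  by (simp add: ET_def)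

sublocale ET: prob_space ET
  unfolding ET_def by (rule prob_space_exponential_density[OF lam])

sublocale ES: prob_space ES
  by (rule ES)

sublocale ET_ES: pair_prob_space ET ES ..

sublocale arrival: prob_space arrival
  unfolding arrival_def by (rule ET_ES.prob_space_axioms)

sublocale arrivals: prob_space arrivals
  unfolding arrivals_def by (rule arrival.prob_space_stream_space)

lemma sets_arrival[measurable_cong]: "sets arrival = sets (borel \<Otimes>\<^sub>M borel)"
  unfolding arrival_def by (rule sets_pair_measure_cong[OF sets_ET sets_ES])

lemma space_arrival: "space arrival = UNIV"
  using sets_eq_imp_space_eq[OF sets_arrival] by (simp add: space_pair_measure)

lemma measurable_Stream_arrivals[measurable]: "(\<lambda>xs. x ## xs) \<in> measurable arrivals arrivals"
  unfolding arrivals_def by (rule measurable_Stream) (auto simp: space_arrival)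

lemma distr_arrival_fst: "distr arrival ET fst = ET"
  unfolding arrival_def by (rule ES.distr_pair_fst)

lemma distr_arrival_snd: "distr arrival ES snd = ES"
proof (rule measure_eqI)
  fix A assume "A \<in> sets (distr arrival ES snd)"
  then have A: "A \<in> sets ES" by simp
  have "emeasure (distr arrival ES snd) A = emeasure arrival (space ET \<times> A)"
    using A sets.sets_into_space[OF A] unfolding arrival_def
    by (subst emeasure_distr) (auto simp: space_pair_measure intro!: arg_cong2[where f = emeasure])
  also have "\<dots> = emeasure ES A"
    unfolding arrival_def using A by (simp add: ES.emeasure_pair_measure_Times ET.emeasure_space_1)
  finally show "emeasure (distr arrival ES snd) A = emeasure ES A" .
qed simp

lemma exponential_distributed_ET: "distributed ET lborel (\<lambda>x. x) (\<lambda>x. ennreal (exponential_density lam x))"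
  unfolding distributed_def by (auto simp: distr_id2 sets_ET ET_def measurable_cong_sets[OF sets_ET refl])

lemma AE_arrival_fst_pos: "AE x in arrival. 0 < fst x"
proof -
  have "AE x in lborel. 0 < ennreal (exponential_density lam x) \<longrightarrow> 0 < x"
    using AE_lborel_singleton[of 0] by eventually_elim (auto simp: exponential_density_def)
  then have "AE x in ET. 0 < x" unfolding ET_def by (subst AE_density) auto
  then have "AE y in distr arrival ET fst. 0 < y" unfolding distr_arrival_fst .
  then show ?thesis by (subst (asm) AE_distr_iff) auto
qed

lemma integrable_arrival_fst: "integrable arrival fst"
proof -
  have "integrable (distr arrival ET fst) (\<lambda>x. x)"
    using ET.erlang_ith_moment_integrable[OF lam exponential_distributed_ET, of 1]
    by (simp add: distr_arrival_fst)
  then show ?thesis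
    by (subst (asm) integrable_distr_eq) (auto simp: arrival_def measurable_cong_sets[OF sets_ET refl])
qed

lemma integral_arrival_fst: "(\<integral>x. fst x \<partial>arrival) = 1 / lam"
proof -
  have "(\<integral>x. x \<partial>distr arrival ET fst) = (\<integral>x. fst x \<partial>arrival)"
    by (rule integral_distr) (auto simp: arrival_def measurable_cong_sets[OF sets_ET refl])
  then show ?thesis
    using ET.exponential_distributed_expectation[OF lam exponential_distributed_ET]
    by (simp add: distr_arrival_fst)
qed

definition below_work :: "real \<Rightarrow> real" where
  "below_work s = s * indicator {..<mp} s"

lemma integrable_arrival_below_work: "integrable arrival (\<lambda>x. below_work (snd x))"
proof -
  have "integrable (distr arrival ES snd) below_work"
    unfolding distr_arrival_snd below_work_def[abs_def] by (rule integrable_below_work)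
  then show ?thesis
    by (subst (asm) integrable_distr_eq)
      (auto simp: arrival_def below_work_def[abs_def] measurable_cong_sets[OF sets_ES refl])
qed

lemma integral_arrival_below_work: "(\<integral>x. below_work (snd x) \<partial>arrival) = (\<beta> + 1/2) / lam"
proof -
  have "(\<integral>x. below_work x \<partial>distr arrival ES snd) = (\<integral>x. below_work (snd x) \<partial>arrival)"
    by (rule integral_distr) (auto simp: arrival_def below_work_def measurable_cong_sets[OF sets_ES refl])
  then show ?thesis
    using mean_below_work lam by (simp add: distr_arrival_snd below_work_def field_simps)
qed

lemma c_nonneg: "0 \<le> c"
  using params by linarith

lemma short_step_below:
  assumes "0 \<le> fst x" and "u \<le> c"
  shows "short_step mm mp c u x = max 0 (u - fst x / 2) + below_work (snd x)"
proof -
  have "max 0 (u - fst x / 2) \<le> c" using assms c_nonneg by simp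
  then have "to_short mm mp c (max 0 (u - fst x / 2)) (snd x) \<longleftrightarrow> snd x < mp"
    using params unfolding to_short_def by auto
  then show ?thesis unfolding short_step_def below_work_def Let_def by (simp add: indicator_def)
qed

lemma short_step_le:
  assumes "0 \<le> fst x" and "u \<le> c"
  shows "short_step mm mp c u x \<le> c + mp"
proof -
  have "max 0 (u - fst x / 2) \<le> c" using assms c_nonneg by simp
  moreover have "below_work (snd x) \<le> mp" using params by (auto simp: below_work_def indicator_def)
  ultimately show ?thesis using short_step_below[OF assms] by linarith
qed

lemma short_step_memoryless:
  assumes "0 \<le> t" and "t < fst x"
  shows "short_step mm mp c u x = short_step mm mp c (max 0 (u - t / 2)) (fst x - t, snd x)"
proof -
  have "max 0 (u - fst x / 2) = max 0 (max 0 (u - t / 2) - (fst x - t) / 2)"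
    using assms by (simp add: max_def field_simps)
  then show ?thesis unfolding short_step_def Let_def by simp
qed

lemma measurable_short_step_arrival[measurable]: "short_step mm mp c u \<in> borel_measurable arrival"
  unfolding short_step_def to_short_def Let_def by measurable

definition potential :: "real \<Rightarrow> real" where
  "potential u = (c + mp - u) / \<beta>"

definition residual_bound :: real where
  "residual_bound = (c + mp) / \<beta>"

lemma potential_le_residual_bound: "0 \<le> u \<Longrightarrow> potential u \<le> residual_bound"
  using beta by (simp add: potential_def residual_bound_def divide_right_mono)

lemma potential_drift:
  assumes u: "u \<le> c"
  shows "(\<integral>\<^sup>+x. ennreal (potential (short_step mm mp c u x)) \<partial>arrival) \<le> ennreal (potential u - 1 / lam)"
    and "1 / lam \<le> potential u"
proof -
  define h where "h x = (c + mp - u + fst x / 2 - below_work (snd x)) / \<beta>" for x :: "real \<times> real"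
  have h_int: "integrable arrival h"
    unfolding h_def using integrable_arrival_fst integrable_arrival_below_work by auto
  have "(\<integral>x. h x \<partial>arrival) = ((c + mp - u) + (1 / lam) / 2 - (\<beta> + 1/2) / lam) / \<beta>"
    unfolding h_def using integrable_arrival_fst integrable_arrival_below_work
    by (simp add: integral_arrival_fst integral_arrival_below_work arrival.prob_space)
  also have "\<dots> = potential u - 1 / lam"
    using lam beta by (simp add: potential_def field_simps)
  finally have h_mean: "(\<integral>x. h x \<partial>arrival) = potential u - 1 / lam" .
  have bounds: "AE x in arrival. potential (short_step mm mp c u x) \<le> h x \<and> 0 \<le> potential (short_step mm mp c u x)"
    using AE_arrival_fst_pos
  proof eventually_elim
    case (elim x)
    then have "0 \<le> fst x" by simp
    from short_step_below[OF this u] short_step_le[OF this u] show ?case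
      using beta by (auto simp: potential_def h_def divide_right_mono)
  qed
  then have h_nonneg: "AE x in arrival. 0 \<le> h x" by eventually_elim auto
  have "(\<integral>\<^sup>+x. ennreal (potential (short_step mm mp c u x)) \<partial>arrival) \<le> (\<integral>\<^sup>+x. ennreal (h x) \<partial>arrival)"
    using bounds by (intro nn_integral_mono_AE) (auto elim!: eventually_mono intro: ennreal_leI)
  also have "\<dots> = ennreal (\<integral>x. h x \<partial>arrival)"
    by (rule nn_integral_eq_integral[OF h_int h_nonneg])
  finally show "(\<integral>\<^sup>+x. ennreal (potential (short_step mm mp c u x)) \<partial>arrival) \<le> ennreal (potential u - 1 / lam)"
    by (simp add: h_mean)
  have "0 \<le> (\<integral>x. h x \<partial>arrival)" by (rule integral_nonneg_AE[OF h_nonneg])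
  then show "1 / lam \<le> potential u" by (simp add: h_mean)
qed

lemma potential_drift_plus:
  assumes g[measurable]: "g \<in> borel_measurable arrival" and g_int: "(\<integral>\<^sup>+x. g x \<partial>arrival) \<le> ennreal (1 / lam)"
    and u: "u \<le> c"
  shows "(\<integral>\<^sup>+x. g x + ennreal (potential (short_step mm mp c u x)) \<partial>arrival) \<le> ennreal (potential u)"
proof -
  have "(\<integral>\<^sup>+x. g x + ennreal (potential (short_step mm mp c u x)) \<partial>arrival) =
      (\<integral>\<^sup>+x. g x \<partial>arrival) + (\<integral>\<^sup>+x. ennreal (potential (short_step mm mp c u x)) \<partial>arrival)"
    by (intro nn_integral_add) (auto simp: potential_def)
  also have "\<dots> \<le> ennreal (1 / lam) + ennreal (potential u - 1 / lam)"
    using g_int potential_drift(1)[OF u] by (rule add_mono)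
  also have "\<dots> = ennreal (potential u)"
    using potential_drift(2)[OF u] lam by (simp add: ennreal_plus[symmetric])
  finally show ?thesis .
qed

lemma ET_memoryless:
  assumes t: "0 \<le> t" and G[measurable]: "G \<in> borel_measurable borel"
  shows "(\<integral>\<^sup>+\<tau>. indicator {t<..} \<tau> * G (\<tau> - t) \<partial>ET) = ennreal (exp (- lam * t)) * (\<integral>\<^sup>+\<tau>. G \<tau> \<partial>ET)"
proof -
  define ed where "ed x = ennreal (exponential_density lam x)" for x
  have [measurable]: "ed \<in> borel_measurable borel" unfolding ed_def exponential_density_def by measurable
  have shift: "ed (t + y) * (indicator {t<..} (t + y) * G (t + y - t)) = ennreal (exp (- lam * t)) * (ed y * G y)"
    if "y \<noteq> 0" for y
  proof (cases "0 < y")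
    case True
    have "exponential_density lam (t + y) = exp (- lam * t) * exponential_density lam y"
      using True t by (simp add: exponential_density_def exp_add[symmetric] algebra_simps)
    then show ?thesis
      using True lam by (simp add: ed_def ennreal_mult exponential_density_nonneg[OF lam] mult.assoc)
  next
    case False
    then show ?thesis using that by (simp add: ed_def exponential_density_def)
  qed
  have "(\<integral>\<^sup>+\<tau>. indicator {t<..} \<tau> * G (\<tau> - t) \<partial>ET) = (\<integral>\<^sup>+\<tau>. ed \<tau> * (indicator {t<..} \<tau> * G (\<tau> - t)) \<partial>lborel)"
    unfolding ET_def ed_def by (rule nn_integral_density) measurable
  also have "\<dots> = (\<integral>\<^sup>+\<tau>. ed \<tau> * (indicator {t<..} \<tau> * G (\<tau> - t)) \<partial>distr lborel borel ((+) t))"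
    by (simp add: lborel_distr_plus)
  also have "\<dots> = (\<integral>\<^sup>+y. ed (t + y) * (indicator {t<..} (t + y) * G (t + y - t)) \<partial>lborel)"
    by (rule nn_integral_distr) auto
  also have "\<dots> = (\<integral>\<^sup>+y. ennreal (exp (- lam * t)) * (ed y * G y) \<partial>lborel)"
  proof (rule nn_integral_cong_AE)
    show "AE y in lborel. ed (t + y) * (indicator {t<..} (t + y) * G (t + y - t)) =
        ennreal (exp (- lam * t)) * (ed y * G y)"
      using AE_lborel_singleton[of 0] by eventually_elim (rule shift)
  qed
  also have "\<dots> = ennreal (exp (- lam * t)) * (\<integral>\<^sup>+y. ed y * G y \<partial>lborel)"
    by (rule nn_integral_cmult) measurable
  also have "(\<integral>\<^sup>+y. ed y * G y \<partial>lborel) = (\<integral>\<^sup>+\<tau>. G \<tau> \<partial>ET)"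
    unfolding ET_def ed_def by (rule nn_integral_density[symmetric]) measurable
  finally show ?thesis .
qed

lemma arrival_memoryless:
  assumes t: "0 \<le> t" and H[measurable]: "H \<in> borel_measurable arrival"
  shows "(\<integral>\<^sup>+x. indicator {t<..} (fst x) * H (fst x - t, snd x) \<partial>arrival) =
    ennreal (exp (- lam * t)) * (\<integral>\<^sup>+x. H x \<partial>arrival)"
proof -
  have [measurable]: "H \<in> borel_measurable (ET \<Otimes>\<^sub>M ES)" using H unfolding arrival_def .
  define G where "G y = (\<integral>\<^sup>+s. H (y, s) \<partial>ES)" for y
  have "G \<in> borel_measurable ET"
    unfolding G_def by (rule ES.borel_measurable_nn_integral_fst) measurable
  then have [measurable]: "G \<in> borel_measurable borel" by (simp add: measurable_cong_sets[OF sets_ET refl])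
  have "(\<integral>\<^sup>+x. indicator {t<..} (fst x) * H (fst x - t, snd x) \<partial>arrival) =
        (\<integral>\<^sup>+\<tau>. (\<integral>\<^sup>+s. indicator {t<..} \<tau> * H (\<tau> - t, s) \<partial>ES) \<partial>ET)"
  proof -
    have "(\<lambda>x. indicator {t<..} (fst x) * H (fst x - t, snd x)) \<in> borel_measurable (ET \<Otimes>\<^sub>M ES)"
      by measurable
    from ES.nn_integral_fst[OF this] show ?thesis unfolding arrival_def by simp
  qed
  also have "\<dots> = (\<integral>\<^sup>+\<tau>. indicator {t<..} \<tau> * G (\<tau> - t) \<partial>ET)"
    unfolding G_def by (intro nn_integral_cong nn_integral_cmult) measurable
  also have "\<dots> = ennreal (exp (- lam * t)) * (\<integral>\<^sup>+\<tau>. G \<tau> \<partial>ET)"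
    by (rule ET_memoryless[OF t]) measurable
  also have "(\<integral>\<^sup>+\<tau>. G \<tau> \<partial>ET) = (\<integral>\<^sup>+x. H x \<partial>arrival)"
    unfolding G_def arrival_def by (rule ES.nn_integral_fst) measurable
  finally show ?thesis .
qed

lemma measurable_below_sum_arrivals[measurable]:
  assumes [measurable]: "f \<in> borel_measurable arrival"
  shows "below_sum mm mp c f k u \<in> borel_measurable arrivals"
proof -
  have "(\<lambda>xs. (u, xs)) \<in> measurable arrivals (borel \<Otimes>\<^sub>M stream_space arrival)"
    unfolding arrivals_def by measurable
  from measurable_compose[OF this measurable_below_sum[OF sets_arrival assms]] show ?thesis
    by simp
qed

lemma nn_integral_below_sum_le:
  assumes g[measurable]: "g \<in> borel_measurable arrival" and g_int: "(\<integral>\<^sup>+x. g x \<partial>arrival) \<le> ennreal (1 / lam)"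
  shows "u \<le> c \<Longrightarrow> (\<integral>\<^sup>+xs. below_sum mm mp c g k u xs \<partial>arrivals) \<le> ennreal (potential u)"
proof (induction k arbitrary: u)
  case (Suc k)
  have "(\<integral>\<^sup>+xs. below_sum mm mp c g (Suc k) u xs \<partial>arrivals) =
      (\<integral>\<^sup>+x. (\<integral>\<^sup>+xs. below_sum mm mp c g (Suc k) u (x ## xs) \<partial>arrivals) \<partial>arrival)"
    unfolding arrivals_def by (rule arrival.nn_integral_stream_space) (fold arrivals_def, measurable)
  also have "\<dots> \<le> (\<integral>\<^sup>+x. g x + ennreal (potential (short_step mm mp c u x)) \<partial>arrival)"
  proof (intro nn_integral_mono)
    fix x
    show "(\<integral>\<^sup>+xs. below_sum mm mp c g (Suc k) u (x ## xs) \<partial>arrivals) \<le>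
        g x + ennreal (potential (short_step mm mp c u x))"
    proof (cases "c < short_step mm mp c u x")
      case True
      then show ?thesis by (simp add: arrivals.emeasure_space_1)
    next
      case False
      then have "(\<integral>\<^sup>+xs. below_sum mm mp c g (Suc k) u (x ## xs) \<partial>arrivals) =
          g x + (\<integral>\<^sup>+xs. below_sum mm mp c g k (short_step mm mp c u x) xs \<partial>arrivals)"
        by (simp add: nn_integral_add arrivals.emeasure_space_1)
      also have "\<dots> \<le> g x + ennreal (potential (short_step mm mp c u x))"
        using Suc.IH False by (intro add_left_mono) simp
      finally show ?thesis .
    qed
  qed
  also have "\<dots> \<le> ennreal (potential u)"
    by (rule potential_drift_plus[OF g g_int Suc.prems])
  finally show ?case .
qed simp

definition gap :: "real \<times> real \<Rightarrow> ennreal" where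
  "gap x = ennreal (fst x)"

lemma measurable_gap[measurable]: "gap \<in> borel_measurable arrival"
  unfolding gap_def by measurable

lemma nn_integral_gap: "(\<integral>\<^sup>+x. gap x \<partial>arrival) = ennreal (1 / lam)"
proof -
  have "AE x in arrival. 0 \<le> fst x" using AE_arrival_fst_pos by eventually_elim simp
  then show ?thesis
    unfolding gap_def
    by (simp add: nn_integral_eq_integral[OF integrable_arrival_fst] integral_arrival_fst)
qed

lemma nn_integral_below_sum_gap_le:
  "u \<le> c \<Longrightarrow> (\<integral>\<^sup>+xs. below_sum mm mp c gap k u xs \<partial>arrivals) \<le> ennreal (potential u)"
  by (rule nn_integral_below_sum_le) (simp_all add: nn_integral_gap)

lemma residual_after_long_gap:
  assumes u: "u \<le> c" and t: "0 \<le> t" "t < fst x"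
  shows "(\<integral>\<^sup>+xs. below_sum mm mp c gap (Suc k) u (x ## xs) - ennreal t \<partial>arrivals) \<le>
      ennreal (fst x - t) + ennreal (potential (short_step mm mp c u x))"
proof -
  define R where "R xs = (if c < short_step mm mp c u x then 0 else below_sum mm mp c gap k (short_step mm mp c u x) xs)" for xs
  have [measurable]: "R \<in> borel_measurable arrivals" unfolding R_def by measurable
  have "(\<integral>\<^sup>+xs. below_sum mm mp c gap (Suc k) u (x ## xs) - ennreal t \<partial>arrivals) =
      (\<integral>\<^sup>+xs. ennreal (fst x - t) + R xs \<partial>arrivals)"
    using t by (simp only: below_sum_Suc_Stream) (simp add: R_def gap_def ennreal_plus_minus_le)
  also have "\<dots> = ennreal (fst x - t) + (\<integral>\<^sup>+xs. R xs \<partial>arrivals)"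
    by (subst nn_integral_add) (auto simp: arrivals.emeasure_space_1)
  also have "\<dots> \<le> ennreal (fst x - t) + ennreal (potential (short_step mm mp c u x))"
  proof (intro add_left_mono)
    show "(\<integral>\<^sup>+xs. R xs \<partial>arrivals) \<le> ennreal (potential (short_step mm mp c u x))"
      using nn_integral_below_sum_gap_le[of "short_step mm mp c u x" k]
      by (cases "c < short_step mm mp c u x") (simp_all add: R_def)
  qed
  finally show ?thesis .
qed

text \<open>Memorylessness: given that the first interarrival time exceeds \<open>t\<close>, its excess over \<open>t\<close> is
  again exponential, and the chain restarts from the workload reached at time \<open>t\<close>.\<close>
lemma nn_integral_long_gap_le:
  assumes u: "u \<le> c" and t: "0 \<le> t"
  shows "(\<integral>\<^sup>+x. indicator {t<..} (fst x) * (ennreal (fst x - t) + ennreal (potential (short_step mm mp c u x))) \<partial>arrival)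
    \<le> ennreal residual_bound * (\<integral>\<^sup>+x. indicator {t<..} (fst x) \<partial>arrival)"
proof -
  define ut where "ut = max 0 (u - t / 2)"
  have ut: "0 \<le> ut" "ut \<le> c" using u t c_nonneg unfolding ut_def by auto
  define H where "H y = gap y + ennreal (potential (short_step mm mp c ut y))" for y
  have [measurable]: "H \<in> borel_measurable arrival" unfolding H_def potential_def by measurable
  have "(\<integral>\<^sup>+x. indicator {t<..} (fst x) * (ennreal (fst x - t) + ennreal (potential (short_step mm mp c u x))) \<partial>arrival)
      = (\<integral>\<^sup>+x. indicator {t<..} (fst x) * H (fst x - t, snd x) \<partial>arrival)"
    using t unfolding H_def gap_def ut_def
    by (intro nn_integral_cong) (auto simp: indicator_def short_step_memoryless[of t])
  also have "\<dots> = ennreal (exp (- lam * t)) * (\<integral>\<^sup>+x. H x \<partial>arrival)"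
    by (rule arrival_memoryless[OF t]) measurable
  also have "\<dots> \<le> ennreal (exp (- lam * t)) * ennreal residual_bound"
  proof (intro mult_left_mono)
    have "(\<integral>\<^sup>+x. H x \<partial>arrival) \<le> ennreal (potential ut)"
      unfolding H_def by (rule potential_drift_plus[OF measurable_gap _ ut(2)]) (simp add: nn_integral_gap)
    also have "\<dots> \<le> ennreal residual_bound"
      using potential_le_residual_bound[OF ut(1)] by (rule ennreal_leI)
    finally show "(\<integral>\<^sup>+x. H x \<partial>arrival) \<le> ennreal residual_bound" .
  qed simp
  also have "ennreal (exp (- lam * t)) = (\<integral>\<^sup>+x. indicator {t<..} (fst x) \<partial>arrival)"
    using arrival_memoryless[OF t, of "\<lambda>_. 1"] by (simp add: arrival.emeasure_space_1)
  finally show ?thesis by (simp add: mult.commute)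
qed

lemma measurable_emeasure_Stream_less:
  assumes [measurable]: "B \<in> borel_measurable arrivals"
  shows "(\<lambda>x. emeasure arrivals {xs \<in> space arrivals. ennreal t < B (x ## xs)}) \<in> borel_measurable arrival"
proof -
  have "(\<lambda>p. fst p ## snd p) \<in> measurable (arrival \<Otimes>\<^sub>M arrivals) arrivals"
    unfolding arrivals_def by measurable
  from measurable_compose[OF this assms]
  have [measurable]: "(\<lambda>p. B (fst p ## snd p)) \<in> borel_measurable (arrival \<Otimes>\<^sub>M arrivals)" by simp
  have eq: "emeasure arrivals {xs \<in> space arrivals. ennreal t < B (x ## xs)} =
      (\<integral>\<^sup>+xs. indicator {p. ennreal t < B (fst p ## snd p)} (x, xs) \<partial>arrivals)" for x
  proof -
    have "{xs \<in> space arrivals. ennreal t < B (x ## xs)} \<in> sets arrivals" by measurable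
    then have "emeasure arrivals {xs \<in> space arrivals. ennreal t < B (x ## xs)} =
        (\<integral>\<^sup>+xs. indicator {xs \<in> space arrivals. ennreal t < B (x ## xs)} xs \<partial>arrivals)"
      by (rule nn_integral_indicator[symmetric])
    also have "\<dots> = (\<integral>\<^sup>+xs. indicator {p. ennreal t < B (fst p ## snd p)} (x, xs) \<partial>arrivals)"
      by (intro nn_integral_cong) (simp add: indicator_def)
    finally show ?thesis .
  qed
  show ?thesis
    unfolding eq by (rule arrivals.borel_measurable_nn_integral_fst) measurable
qed

lemma residual_after_short_gap:
  assumes IH: "\<And>u t. u \<le> c \<Longrightarrow> 0 \<le> t \<Longrightarrow> (\<integral>\<^sup>+xs. below_sum mm mp c gap k u xs - ennreal t \<partial>arrivals)
      \<le> ennreal residual_bound * emeasure arrivals {xs \<in> space arrivals. ennreal t < below_sum mm mp c gap k u xs}"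
    and t: "0 \<le> t" "fst x \<le> t"
  shows "(\<integral>\<^sup>+xs. below_sum mm mp c gap (Suc k) u (x ## xs) - ennreal t \<partial>arrivals) \<le> ennreal residual_bound *
    emeasure arrivals {xs \<in> space arrivals. ennreal t < below_sum mm mp c gap (Suc k) u (x ## xs)}"
proof (cases "c < short_step mm mp c u x")
  case True
  then show ?thesis using t by (simp add: gap_def ennreal_minus ennreal_neg)
next
  case False
  define a where "a = max 0 (fst x)"
  have a: "0 \<le> a" "a \<le> t" "gap x = ennreal a"
    using t unfolding a_def gap_def by (auto simp: max_def ennreal_neg)
  let ?R = "below_sum mm mp c gap k (short_step mm mp c u x)"
  have "(\<integral>\<^sup>+xs. below_sum mm mp c gap (Suc k) u (x ## xs) - ennreal t \<partial>arrivals) =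
      (\<integral>\<^sup>+xs. ?R xs - ennreal (t - a) \<partial>arrivals)"
    using False a by (simp add: ennreal_plus_minus_ge)
  moreover have "emeasure arrivals {xs \<in> space arrivals. ennreal t < below_sum mm mp c gap (Suc k) u (x ## xs)} =
      emeasure arrivals {xs \<in> space arrivals. ennreal (t - a) < ?R xs}"
    using False a by (simp add: ennreal_less_plus_iff)
  ultimately show ?thesis
    using IH[of "short_step mm mp c u x" "t - a"] False a by simp
qed

lemma nn_integral_below_sum_residual_le:
  "u \<le> c \<Longrightarrow> 0 \<le> t \<Longrightarrow> (\<integral>\<^sup>+xs. below_sum mm mp c gap k u xs - ennreal t \<partial>arrivals)
     \<le> ennreal residual_bound * emeasure arrivals {xs \<in> space arrivals. ennreal t < below_sum mm mp c gap k u xs}"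
proof (induction k arbitrary: u t)
  case (Suc k)
  note u = Suc.prems(1) and t = Suc.prems(2)
  define B where "B xs = below_sum mm mp c gap (Suc k) u xs" for xs
  define I where "I x = (\<integral>\<^sup>+xs. B (x ## xs) - ennreal t \<partial>arrivals)" for x
  define Z where "Z x = emeasure arrivals {xs \<in> space arrivals. ennreal t < B (x ## xs)}" for x
  define ind where "ind x = (indicator {t<..} (fst x) :: ennreal)" for x :: "real \<times> real"
  have [measurable]: "B \<in> borel_measurable arrivals" unfolding B_def by measurable
  have [measurable]: "Z \<in> borel_measurable arrival"
    unfolding Z_def by (rule measurable_emeasure_Stream_less) measurable
  have [measurable]: "ind \<in> borel_measurable arrival" unfolding ind_def by measurable
  have long: "I x \<le> ennreal (fst x - t) + ennreal (potential (short_step mm mp c u x))"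
    and long_Z: "Z x = 1"
    if "t < fst x" for x
  proof -
    show "I x \<le> ennreal (fst x - t) + ennreal (potential (short_step mm mp c u x))"
      unfolding I_def B_def by (rule residual_after_long_gap[OF u t that])
    have "ennreal t < B (x ## xs)" for xs
    proof -
      have "ennreal t < gap x" using that t by (simp add: gap_def ennreal_less_iff)
      then show ?thesis unfolding B_def by (simp add: less_le_trans)
    qed
    then show "Z x = 1" unfolding Z_def by (simp add: arrivals.emeasure_space_1)
  qed
  have short: "I x \<le> ennreal residual_bound * Z x" if "\<not> t < fst x" for x
    using residual_after_short_gap[OF Suc.IH t] that unfolding I_def Z_def B_def by simp
  have "(\<integral>\<^sup>+xs. B xs - ennreal t \<partial>arrivals) = (\<integral>\<^sup>+x. I x \<partial>arrival)"
    unfolding arrivals_def I_def by (rule arrival.nn_integral_stream_space) (fold arrivals_def, measurable)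
  also have "\<dots> \<le> (\<integral>\<^sup>+x. ind x * (ennreal (fst x - t) + ennreal (potential (short_step mm mp c u x)))
      + ennreal residual_bound * ((1 - ind x) * Z x) \<partial>arrival)"
  proof (intro nn_integral_mono)
    fix x
    show "I x \<le> ind x * (ennreal (fst x - t) + ennreal (potential (short_step mm mp c u x)))
        + ennreal residual_bound * ((1 - ind x) * Z x)"
      using long[of x] short[of x] by (cases "t < fst x") (auto simp: ind_def)
  qed
  also have "\<dots> = (\<integral>\<^sup>+x. ind x * (ennreal (fst x - t) + ennreal (potential (short_step mm mp c u x))) \<partial>arrival)
      + ennreal residual_bound * (\<integral>\<^sup>+x. (1 - ind x) * Z x \<partial>arrival)"
    by (subst nn_integral_add) (auto simp: nn_integral_cmult potential_def)
  also have "\<dots> \<le> ennreal residual_bound * (\<integral>\<^sup>+x. ind x \<partial>arrival)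
      + ennreal residual_bound * (\<integral>\<^sup>+x. (1 - ind x) * Z x \<partial>arrival)"
    using nn_integral_long_gap_le[OF u t] unfolding ind_def by (rule add_right_mono)
  also have "\<dots> = ennreal residual_bound * (\<integral>\<^sup>+x. ind x + (1 - ind x) * Z x \<partial>arrival)"
    by (subst nn_integral_add) (auto simp: distrib_left)
  also have "(\<integral>\<^sup>+x. ind x + (1 - ind x) * Z x \<partial>arrival) = (\<integral>\<^sup>+x. Z x \<partial>arrival)"
  proof (intro nn_integral_cong)
    fix x
    show "ind x + (1 - ind x) * Z x = Z x"
      using long_Z[of x] by (cases "t < fst x") (auto simp: ind_def)
  qed
  also have "\<dots> = emeasure arrivals {xs \<in> space arrivals. ennreal t < B xs}"
    unfolding arrivals_def Z_def
    by (subst arrival.emeasure_stream_space)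
      (fold arrivals_def, measurable, simp add: arrivals_def space_stream_space space_arrival)
  finally show ?case unfolding B_def .
qed simp

section \<open>The below-period length on the arrival stream\<close>

definition below_length :: "(real \<times> real) stream \<Rightarrow> real" where
  "below_length xs = below_len mm mp c (\<lambda>i. fst (xs !! i)) (\<lambda>i. snd (xs !! i))"

definition exits_below :: "(real \<times> real) stream \<Rightarrow> bool" where
  "exits_below xs \<longleftrightarrow> (\<forall>i. 0 < fst (xs !! i)) \<and> (\<exists>N. c < ws_post_stream mm mp c c xs N)"

lemma measurable_below_length[measurable]: "below_length \<in> borel_measurable arrivals"
proof -
  have [measurable]: "(\<lambda>xs. fst (xs !! i)) \<in> borel_measurable arrivals"
    "(\<lambda>xs. snd (xs !! i)) \<in> borel_measurable arrivals" for i
    unfolding arrivals_def by measurable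
  show ?thesis
    unfolding below_length_def by (rule measurable_below_len[OF _ _ c_nonneg]) measurable
qed

lemma measurable_exits_below[measurable]: "Measurable.pred arrivals exits_below"
  unfolding exits_below_def arrivals_def by measurable

lemma exits_below_first_exit:
  assumes "exits_below xs"
  obtains N where "below_length xs = arr (\<lambda>i. fst (xs !! i)) N"
    and "c < ws mm mp c c (\<lambda>i. fst (xs !! i)) (\<lambda>i. snd (xs !! i)) (arr (\<lambda>i. fst (xs !! i)) N)"
    and "c < ws_post_stream mm mp c c xs N" and "\<forall>j<N. ws_post_stream mm mp c c xs j \<le> c"
proof -
  have pos: "\<And>i. 0 < fst (xs !! i)" and ex: "\<exists>N. c < ws_post_stream mm mp c c xs N"
    using assms unfolding exits_below_def by auto
  define N where "N = (LEAST N. c < ws_post_stream mm mp c c xs N)"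
  have exit: "c < ws_post_stream mm mp c c xs N"
    unfolding N_def using ex by (rule LeastI_ex)
  have before: "\<forall>j<N. ws_post_stream mm mp c c xs j \<le> c"
  proof (intro allI impI)
    fix j assume "j < N"
    then have "\<not> c < ws_post_stream mm mp c c xs j" unfolding N_def by (rule not_less_Least)
    then show "ws_post_stream mm mp c c xs j \<le> c" by simp
  qed
  show ?thesis
    using below_len_first_exit[OF c_nonneg pos exit] before exit
    by (intro that) (auto simp: below_length_def)
qed

lemma below_length_pos: "exits_below xs \<Longrightarrow> 0 < below_length xs"
  by (metis exits_below_first_exit exits_below_def arr_pos)

lemma below_sum_gap_eventually:
  assumes "exits_below xs"
  obtains k0 where "\<And>k. k0 \<le> k \<Longrightarrow> below_sum mm mp c gap k c xs = ennreal (below_length xs)"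
proof -
  obtain N where len: "below_length xs = arr (\<lambda>i. fst (xs !! i)) N"
    and exit: "c < ws_post_stream mm mp c c xs N" and before: "\<forall>j<N. ws_post_stream mm mp c c xs j \<le> c"
    using exits_below_first_exit[OF assms] by metis
  have pos: "0 \<le> fst (xs !! i)" for i
    using assms unfolding exits_below_def by (auto intro: less_imp_le)
  have "below_sum mm mp c gap k c xs = ennreal (below_length xs)" if "Suc N \<le> k" for k
  proof -
    have "below_sum mm mp c gap k c xs = (\<Sum>i<Suc N. ennreal (fst (xs !! i)))"
      using that exit before by (subst below_sum_exit[of N]) (auto simp: gap_def)
    also have "\<dots> = ennreal (below_length xs)"
      unfolding len arr_def by (rule sum_ennreal) (simp add: pos)
    finally show ?thesis .
  qed
  then show ?thesis by (rule that)
qed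

lemma SUP_below_sum_gap:
  assumes "exits_below xs"
  shows "(SUP k. below_sum mm mp c gap k c xs) = ennreal (below_length xs)"
  using below_sum_gap_eventually[OF assms] by (metis SUP_eventually_const incseq_below_sum)

lemma below_sum_gap_le_below_length:
  "exits_below xs \<Longrightarrow> below_sum mm mp c gap k c xs \<le> ennreal (below_length xs)"
  by (metis SUP_below_sum_gap SUP_upper UNIV_I)

text \<open>A below period that never ends would last at least \<open>k\<close> arrivals for every \<open>k\<close>; with the
  constant \<open>1/\<lambda>\<close> in place of the interarrival time, the drift bound gives
  \<open>k/\<lambda> \<cdot> P(never exit) \<le> potential c\<close>.\<close>
lemma prob_never_exits:
  "measure arrivals {xs \<in> space arrivals. \<forall>N. ws_post_stream mm mp c c xs N \<le> c} = 0"
proof -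
  define A where "A = {xs \<in> space arrivals. \<forall>N. ws_post_stream mm mp c c xs N \<le> c}"
  have [measurable]: "A \<in> sets arrivals" unfolding A_def arrivals_def by measurable
  define g where "g = (\<lambda>x::real \<times> real. ennreal (1 / lam))"
  have pot: "0 \<le> potential c" using beta params by (simp add: potential_def)
  have bound: "real k / lam * measure arrivals A \<le> potential c" for k
  proof -
    have "ennreal (real k / lam * measure arrivals A) = ennreal (real k / lam) * emeasure arrivals A"
      using lam by (subst ennreal_mult) (auto simp: arrivals.emeasure_eq_measure)
    also have "\<dots> = (\<integral>\<^sup>+xs. ennreal (real k / lam) * indicator A xs \<partial>arrivals)"
      by (simp add: nn_integral_cmult_indicator)
    also have "\<dots> \<le> (\<integral>\<^sup>+xs. below_sum mm mp c g k c xs \<partial>arrivals)"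
    proof (intro nn_integral_mono)
      fix xs
      have "xs \<in> A \<Longrightarrow> below_sum mm mp c g k c xs = ennreal (real k / lam)"
        unfolding A_def g_def using lam
        by (subst below_sum_no_exit) (auto simp: ennreal_of_nat_eq_real_of_nat ennreal_mult[symmetric])
      then show "ennreal (real k / lam) * indicator A xs \<le> below_sum mm mp c g k c xs"
        by (cases "xs \<in> A") auto
    qed
    also have "\<dots> \<le> ennreal (potential c)"
      by (rule nn_integral_below_sum_le) (simp_all add: g_def arrival.emeasure_space_1)
    finally show ?thesis using pot by (simp add: ennreal_le_iff)
  qed
  have "measure arrivals A \<le> 0"
  proof (rule field_le_epsilon)
    fix e :: real assume e: "0 < e"
    obtain k :: nat where k: "lam * potential c / e < real k" using reals_Archimedean2 by blast
    moreover have "0 \<le> lam * potential c / e" using pot lam e by simp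
    ultimately have k_pos: "0 < real k" by linarith
    have "measure arrivals A \<le> potential c * lam / real k"
      using bound[of k] k_pos lam by (simp add: field_simps)
    also have "\<dots> < e" using k k_pos e lam by (simp add: field_simps)
    finally show "measure arrivals A \<le> 0 + e" by simp
  qed
  then show ?thesis unfolding A_def[symmetric] by (simp add: antisym)
qed

lemma AE_exits_below: "AE xs in arrivals. exits_below xs"
proof -
  have "AE xs in stream_space arrival. stream_all (\<lambda>x. 0 < fst x) xs"
    using AE_arrival_fst_pos by (intro arrival.AE_stream_all) measurable
  then have pos: "AE xs in arrivals. \<forall>i. 0 < fst (xs !! i)"
    unfolding arrivals_def stream_all_def .
  have "{xs \<in> space arrivals. \<forall>N. ws_post_stream mm mp c c xs N \<le> c} \<in> sets arrivals"
    unfolding arrivals_def by measurable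
  with prob_never_exits
  have "{xs \<in> space arrivals. \<forall>N. ws_post_stream mm mp c c xs N \<le> c} \<in> null_sets arrivals"
    by (simp add: arrivals.emeasure_eq_measure null_sets_def)
  then have "AE xs in arrivals. \<exists>N. c < ws_post_stream mm mp c c xs N"
    by (rule AE_not_in[THEN eventually_mono]) (auto simp: not_le arrivals_def space_stream_space space_arrival)
  with pos show ?thesis unfolding exits_below_def by eventually_elim auto
qed

lemma nn_integral_below_length_le: "(\<integral>\<^sup>+xs. ennreal (below_length xs) \<partial>arrivals) \<le> ennreal (potential c)"
proof -
  have "(\<integral>\<^sup>+xs. ennreal (below_length xs) \<partial>arrivals) = (\<integral>\<^sup>+xs. (SUP k. below_sum mm mp c gap k c xs) \<partial>arrivals)"
    using AE_exits_below by (intro nn_integral_cong_AE) (auto elim!: eventually_mono simp: SUP_below_sum_gap)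
  also have "\<dots> = (SUP k. \<integral>\<^sup>+xs. below_sum mm mp c gap k c xs \<partial>arrivals)"
    by (rule nn_integral_monotone_convergence_SUP) (auto simp: incseq_def le_fun_def intro: incseq_below_sum[THEN incseqD])
  also have "\<dots> \<le> ennreal (potential c)"
    by (rule SUP_least) (rule nn_integral_below_sum_gap_le, simp)
  finally show ?thesis .
qed

lemma nn_integral_below_length_residual_le:
  assumes t: "0 \<le> t"
  shows "(\<integral>\<^sup>+xs. ennreal (below_length xs - t) \<partial>arrivals) \<le>
    ennreal residual_bound * emeasure arrivals {xs \<in> space arrivals. t < below_length xs}"
proof -
  have inc: "incseq (\<lambda>k xs. below_sum mm mp c gap k c xs - ennreal t)"
    using incseq_below_sum by (auto simp: incseq_def le_fun_def intro: ennreal_minus_mono)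
  have "(\<integral>\<^sup>+xs. ennreal (below_length xs - t) \<partial>arrivals) =
      (\<integral>\<^sup>+xs. (SUP k. below_sum mm mp c gap k c xs - ennreal t) \<partial>arrivals)"
  proof (rule nn_integral_cong_AE)
    show "AE xs in arrivals. ennreal (below_length xs - t) = (SUP k. below_sum mm mp c gap k c xs - ennreal t)"
      using AE_exits_below
    proof eventually_elim
      case (elim xs)
      obtain k0 where "\<And>k. k0 \<le> k \<Longrightarrow> below_sum mm mp c gap k c xs = ennreal (below_length xs)"
        using below_sum_gap_eventually[OF elim] by blast
      then have "(SUP k. below_sum mm mp c gap k c xs - ennreal t) = ennreal (below_length xs) - ennreal t"
        using inc by (intro SUP_eventually_const[where m = k0]) (auto simp: incseq_def le_fun_def)
      then show ?case using t by (simp add: ennreal_minus)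
    qed
  qed
  also have "\<dots> = (SUP k. \<integral>\<^sup>+xs. below_sum mm mp c gap k c xs - ennreal t \<partial>arrivals)"
    by (rule nn_integral_monotone_convergence_SUP[OF inc]) measurable
  also have "\<dots> \<le> ennreal residual_bound * emeasure arrivals {xs \<in> space arrivals. t < below_length xs}"
  proof (rule SUP_least)
    fix k
    have "(\<integral>\<^sup>+xs. below_sum mm mp c gap k c xs - ennreal t \<partial>arrivals) \<le>
        ennreal residual_bound * emeasure arrivals {xs \<in> space arrivals. ennreal t < below_sum mm mp c gap k c xs}"
      using t c_nonneg by (intro nn_integral_below_sum_residual_le) auto
    also have "\<dots> \<le> ennreal residual_bound * emeasure arrivals {xs \<in> space arrivals. t < below_length xs}"
    proof (intro mult_left_mono emeasure_mono_AE)
      show "AE xs in arrivals. xs \<in> {xs \<in> space arrivals. ennreal t < below_sum mm mp c gap k c xs}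
          \<longrightarrow> xs \<in> {xs \<in> space arrivals. t < below_length xs}"
        using AE_exits_below
      proof eventually_elim
        case (elim xs)
        then show ?case
          using below_sum_gap_le_below_length[OF elim, of k] t
          by (auto simp: ennreal_less_iff dest: less_le_trans)
      qed
    qed auto
    finally show "(\<integral>\<^sup>+xs. below_sum mm mp c gap k c xs - ennreal t \<partial>arrivals) \<le>
        ennreal residual_bound * emeasure arrivals {xs \<in> space arrivals. t < below_length xs}" .
  qed
  finally show ?thesis .
qed

lemma integrable_below_length: "integrable arrivals below_length"
proof (rule integrableI_nonneg)
  show "AE xs in arrivals. 0 \<le> below_length xs"
    using AE_exits_below by eventually_elim (simp add: below_length_pos less_imp_le)
  show "(\<integral>\<^sup>+xs. ennreal (below_length xs) \<partial>arrivals) < \<infinity>"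
    using nn_integral_below_length_le by (rule le_less_trans) simp
qed simp

lemma integral_below_length_le: "(\<integral>xs. below_length xs \<partial>arrivals) \<le> mp / \<beta>"
proof -
  have "AE xs in arrivals. 0 \<le> below_length xs"
    using AE_exits_below by eventually_elim (simp add: below_length_pos less_imp_le)
  then have "ennreal (\<integral>xs. below_length xs \<partial>arrivals) = (\<integral>\<^sup>+xs. ennreal (below_length xs) \<partial>arrivals)"
    by (rule nn_integral_eq_integral[OF integrable_below_length, symmetric])
  also have "\<dots> \<le> ennreal (mp / \<beta>)"
    using nn_integral_below_length_le by (simp add: potential_def)
  finally show ?thesis
    using params beta by (simp add: ennreal_le_iff)
qed

lemma mean_residual_bounded_below_length:
  "mean_residual_bounded residual_bound (distr arrivals borel below_length)"
  unfolding mean_residual_bounded_def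
proof (intro conjI allI impI)
  show "prob_space (distr arrivals borel below_length)"
    by (rule arrivals.prob_space_distr) measurable
  show "AE x in distr arrivals borel below_length. 0 < x"
    using AE_exits_below by (subst AE_distr_iff) (auto elim!: eventually_mono simp: below_length_pos)
  fix t :: real assume t: "0 \<le> t"
  have "(\<integral>\<^sup>+x. ennreal (x - t) \<partial>distr arrivals borel below_length) =
      (\<integral>\<^sup>+xs. ennreal (below_length xs - t) \<partial>arrivals)"
    by (rule nn_integral_distr) auto
  moreover have "emeasure (distr arrivals borel below_length) {t<..} =
      emeasure arrivals {xs \<in> space arrivals. t < below_length xs}"
    by (subst emeasure_distr) (auto intro!: arg_cong2[where f = emeasure])
  ultimately show "(\<integral>\<^sup>+x. ennreal (x - t) \<partial>distr arrivals borel below_length) \<le>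
      ennreal residual_bound * emeasure (distr arrivals borel below_length) {t<..}"
    using nn_integral_below_length_residual_le[OF t] by simp
qed simp

lemma exits_below_ws_exceeds:
  assumes "exits_below xs"
  shows "\<exists>t>0. c < ws mm mp c c (\<lambda>i. fst (xs !! i)) (\<lambda>i. snd (xs !! i)) t"
proof -
  obtain N where "c < ws mm mp c c (\<lambda>i. fst (xs !! i)) (\<lambda>i. snd (xs !! i)) (arr (\<lambda>i. fst (xs !! i)) N)"
    using exits_below_first_exit[OF assms] by metis
  moreover have "0 < arr (\<lambda>i. fst (xs !! i)) N"
    using assms unfolding exits_below_def by (intro arr_pos) auto
  ultimately show ?thesis by blast
qed

lemma below_length_transfer:
  assumes h: "h \<in> measurable M arrivals" and distr_h: "distr M arrivals h = arrivals"
  shows "AE \<omega> in M. exits_below (h \<omega>)"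
    and "integrable M (\<lambda>\<omega>. below_length (h \<omega>))"
    and "(\<integral>\<omega>. below_length (h \<omega>) \<partial>M) \<le> mp / \<beta>"
    and "distr M borel (\<lambda>\<omega>. below_length (h \<omega>)) = distr arrivals borel below_length"
proof -
  have "AE xs in distr M arrivals h. exits_below xs"
    unfolding distr_h by (rule AE_exits_below)
  then show "AE \<omega> in M. exits_below (h \<omega>)"
    by (subst (asm) AE_distr_iff[OF h]) auto
  have "integrable (distr M arrivals h) below_length"
    unfolding distr_h by (rule integrable_below_length)
  then show "integrable M (\<lambda>\<omega>. below_length (h \<omega>))"
    by (subst (asm) integrable_distr_eq[OF h]) auto
  have "(\<integral>\<omega>. below_length (h \<omega>) \<partial>M) = (\<integral>xs. below_length xs \<partial>distr M arrivals h)"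
    by (rule integral_distr[OF h, symmetric]) simp
  then show "(\<integral>\<omega>. below_length (h \<omega>) \<partial>M) \<le> mp / \<beta>"
    using integral_below_length_le unfolding distr_h by simp
  have "distr (distr M arrivals h) borel below_length = distr M borel (\<lambda>\<omega>. below_length (h \<omega>))"
    by (subst distr_distr[OF _ h]) (auto simp: comp_def)
  then show "distr M borel (\<lambda>\<omega>. below_length (h \<omega>)) = distr arrivals borel below_length"
    unfolding distr_h by simp
qed

end

section \<open>Independent arrivals form an i.i.d. stream\<close>

lemma scylinder_UNIV_iff: "x \<in> scylinder UNIV As \<longleftrightarrow> (\<forall>i<length As. x !! i \<in> As ! i)"
proof (induction As arbitrary: x)
  case (Cons A As)
  then show ?case by (auto simp: less_Suc_eq_0_disj)
qed simp

lemma emeasure_stream_space_scylinder: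
  assumes "prob_space D" and space: "space D = UNIV" and As: "\<forall>A\<in>set As. A \<in> sets D"
  shows "emeasure (stream_space D) (scylinder UNIV As) = (\<Prod>A\<leftarrow>As. emeasure D A)"
  using As
proof (induction As)
  interpret D: prob_space D by fact
  interpret P: prob_space "stream_space D" by (rule D.prob_space_stream_space)
  case Nil
  have "scylinder UNIV [] = space (stream_space D)" by (simp add: space_stream_space space)
  then show ?case using P.emeasure_space_1 by simp
next
  interpret D: prob_space D by fact
  case (Cons A As)
  have A: "A \<in> sets D" and As: "\<forall>A\<in>set As. A \<in> sets D" using Cons.prems by auto
  have "scylinder UNIV (A # As) \<in> sets (stream_space D)"
    using sets_scylinder[of "A # As" D] Cons.prems space by simp
  then have "emeasure (stream_space D) (scylinder UNIV (A # As)) =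
      (\<integral>\<^sup>+t. emeasure (stream_space D) {x \<in> space (stream_space D). t ## x \<in> scylinder UNIV (A # As)} \<partial>D)"
    by (rule D.emeasure_stream_space)
  also have "\<dots> = (\<integral>\<^sup>+t. emeasure (stream_space D) (scylinder UNIV As) * indicator A t \<partial>D)"
  proof (intro nn_integral_cong)
    fix t
    have "{x \<in> space (stream_space D). t ## x \<in> scylinder UNIV (A # As)} = (if t \<in> A then scylinder UNIV As else {})"
      by (auto simp: space_stream_space space scylinder_streams[of UNIV, THEN subsetD])
    then show "emeasure (stream_space D) {x \<in> space (stream_space D). t ## x \<in> scylinder UNIV (A # As)} =
        emeasure (stream_space D) (scylinder UNIV As) * indicator A t"
      by simp
  qed
  also have "\<dots> = emeasure (stream_space D) (scylinder UNIV As) * emeasure D A"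
    using A by (subst nn_integral_cmult) auto
  finally show ?case using Cons.IH[OF As] by (simp add: mult.commute)
qed

lemma (in prob_space) prob_indep_pairs:
  fixes T S :: "nat \<Rightarrow> 'a \<Rightarrow> real"
  assumes indep: "indep_vars (\<lambda>_. borel) (\<lambda>k. case k of Inl i \<Rightarrow> T i | Inr i \<Rightarrow> S i) UNIV"
    and A: "\<And>i. i < n \<Longrightarrow> A i \<in> sets borel" and B: "\<And>i. i < n \<Longrightarrow> B i \<in> sets borel" and n: "0 < n"
  shows "prob {\<omega> \<in> space M. \<forall>i<n. T i \<omega> \<in> A i \<and> S i \<omega> \<in> B i} =
    (\<Prod>i<n. prob (T i -` A i \<inter> space M) * prob (S i -` B i \<inter> space M))"
proof -
  define X where "X k = (case k of Inl i \<Rightarrow> T i | Inr i \<Rightarrow> S i)" for k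
  define C where "C k = (case k of Inl i \<Rightarrow> A i | Inr i \<Rightarrow> B i)" for k
  define J where "J = Inl ` {..<n} \<union> Inr ` {..<n}"
  have J: "J \<noteq> {}" "finite J" using n unfolding J_def by (auto intro!: finite_imageI)
  have "{\<omega> \<in> space M. \<forall>i<n. T i \<omega> \<in> A i \<and> S i \<omega> \<in> B i} = (\<Inter>j\<in>J. X j -` C j \<inter> space M)"
    using n unfolding J_def X_def C_def by (auto simp: ball_Un dest!: ball_imageD)
  also have "prob \<dots> = (\<Prod>j\<in>J. prob (X j -` C j \<inter> space M))"
  proof (rule indep_varsD)
    show "indep_vars (\<lambda>_. borel) X UNIV" using indep unfolding X_def[abs_def] .
    show "C j \<in> sets borel" if "j \<in> J" for j using A B that unfolding J_def C_def by auto
  qed (use J in auto)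
  also have "\<dots> = (\<Prod>i<n. prob (T i -` A i \<inter> space M)) * (\<Prod>i<n. prob (S i -` B i \<inter> space M))"
    unfolding J_def by (subst prod.union_disjoint) (auto simp: prod.reindex X_def C_def)
  finally show ?thesis by (simp add: prod.distrib)
qed

lemma measurable_to_stream_pairs:
  assumes sets_D: "sets D = sets (borel \<Otimes>\<^sub>M borel)"
    and [measurable]: "\<And>i. T i \<in> borel_measurable M" "\<And>i. S i \<in> borel_measurable M"
  shows "(\<lambda>\<omega>. to_stream (\<lambda>i. (T i \<omega>, S i \<omega>))) \<in> measurable M (stream_space D)"
proof -
  have "(\<lambda>\<omega> i. (T i \<omega>, S i \<omega>)) \<in> measurable M (\<Pi>\<^sub>M i\<in>UNIV. D)"
    by (rule measurable_PiM_single') (auto simp: measurable_cong_sets[OF refl sets_D]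
      sets_eq_imp_space_eq[OF sets_D] space_pair_measure)
  from measurable_compose[OF this measurable_to_stream] show ?thesis by simp
qed

lemma distr_iid_stream:
  fixes M :: "'w measure" and T S :: "nat \<Rightarrow> 'w \<Rightarrow> real" and lam :: real
  assumes "prob_space M" and lam: "0 < lam"
    and T_exp: "\<And>i. distributed M lborel (T i) (exponential_density lam)"
    and S_meas: "\<And>i. S i \<in> borel_measurable M"
    and S_iid: "\<And>i. distr M borel (S i) = distr M borel (S 0)"
    and indep: "prob_space.indep_vars M (\<lambda>_. borel) (\<lambda>k. case k of Inl i \<Rightarrow> T i | Inr i \<Rightarrow> S i) UNIV"
  defines "D \<equiv> density lborel (\<lambda>x. ennreal (exponential_density lam x)) \<Otimes>\<^sub>M distr M borel (S 0)"
  shows "distr M (stream_space D) (\<lambda>\<omega>. to_stream (\<lambda>i. (T i \<omega>, S i \<omega>))) = stream_space D"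
proof -
  interpret prob_space M by fact
  define ET where "ET = density lborel (\<lambda>x. ennreal (exponential_density lam x))"
  define ES where "ES = distr M borel (S 0)"
  interpret ET: prob_space ET unfolding ET_def by (rule prob_space_exponential_density[OF lam])
  interpret ES: prob_space ES unfolding ES_def by (rule prob_space_distr[OF S_meas])
  interpret ET_ES: pair_prob_space ET ES ..
  have sets_ET: "sets ET = sets borel" and sets_ES: "sets ES = sets borel"
    by (simp_all add: ET_def ES_def)
  have sets_D[measurable_cong]: "sets D = sets (borel \<Otimes>\<^sub>M borel)"
    unfolding D_def by (rule sets_pair_measure_cong) simp_all
  have space_D: "space D = UNIV"
    using sets_eq_imp_space_eq[OF sets_D] by (simp add: space_pair_measure)
  interpret D: prob_space D
    unfolding D_def ET_def[symmetric] ES_def[symmetric] by (rule ET_ES.prob_space_axioms)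
  have [measurable]: "T i \<in> borel_measurable M" for i
    using T_exp[of i] unfolding distributed_def by simp
  note [measurable] = S_meas
  have emeasure_D: "emeasure D (A \<times> B) = ennreal (prob (T i -` A \<inter> space M) * prob (S i -` B \<inter> space M))"
    if "A \<in> sets borel" "B \<in> sets borel" for A B i
  proof -
    have "emeasure ET A = emeasure (distr M lborel (T i)) A"
      using T_exp[of i] unfolding distributed_def ET_def by simp
    moreover have "emeasure ES B = emeasure (distr M borel (S i)) B"
      by (simp add: ES_def S_iid[of i])
    ultimately show ?thesis
      using that unfolding D_def ET_def[symmetric] ES_def[symmetric]
      by (simp add: ES.emeasure_pair_measure_Times sets_ET sets_ES emeasure_distr emeasure_eq_measure ennreal_mult)
  qed
  define h where "h \<omega> = to_stream (\<lambda>i. (T i \<omega>, S i \<omega>))" for \<omega>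
  have h_meas: "h \<in> measurable M (stream_space D)"
    unfolding h_def by (rule measurable_to_stream_pairs[OF sets_D]) measurable
  define G where "G = {(A::real set) \<times> (B::real set) | A B. A \<in> sets borel \<and> B \<in> sets borel}"
  show ?thesis
    unfolding h_def[symmetric]
  proof (rule stream_space_eq_scylinder[where G = G and C = "{UNIV}"])
    show "Int_stable G"
    proof (rule Int_stableI)
      fix X Y assume "X \<in> G" "Y \<in> G"
      then obtain A B A' B' where "X = A \<times> B" "Y = A' \<times> B'"
        "A \<in> sets borel" "B \<in> sets borel" "A' \<in> sets borel" "B' \<in> sets borel"
        unfolding G_def by blast
      then show "X \<inter> Y \<in> G" unfolding G_def
        by (intro CollectI exI[of _ "A \<inter> A'"] exI[of _ "B \<inter> B'"]) (auto simp: Times_Int_Times)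
    qed
    show "sets D = sets (sigma (space D) G)"
      unfolding sets_D space_D G_def sets_pair_measure by (simp add: space_pair_measure)
    fix As assume ne: "As \<noteq> []" and As: "As \<in> lists G"
    define n where "n = length As"
    have "\<forall>i<n. \<exists>A B. As ! i = A \<times> B \<and> A \<in> sets borel \<and> B \<in> sets borel"
      using As unfolding n_def G_def by (auto simp: in_lists_conv_set)
    then obtain A B where AB: "\<And>i. i < n \<Longrightarrow> As ! i = A i \<times> B i \<and> A i \<in> sets borel \<and> B i \<in> sets borel"
      by metis
    have cyl: "h \<omega> \<in> scylinder (space D) As \<longleftrightarrow> (\<forall>i<n. T i \<omega> \<in> A i \<and> S i \<omega> \<in> B i)" for \<omega>
      using AB unfolding space_D scylinder_UNIV_iff n_def by (auto simp: h_def to_stream_def)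
    have "scylinder (space D) As \<in> sets (stream_space D)"
      using As unfolding G_def by (intro sets_scylinder) (auto simp: in_lists_conv_set sets_D)
    then have "emeasure (distr M (stream_space D) h) (scylinder (space D) As) =
        emeasure M (h -` scylinder (space D) As \<inter> space M)"
      by (rule emeasure_distr[OF h_meas])
    also have "h -` scylinder (space D) As \<inter> space M = {\<omega> \<in> space M. \<forall>i<n. T i \<omega> \<in> A i \<and> S i \<omega> \<in> B i}"
      using cyl by auto
    also have "emeasure M \<dots> = ennreal (prob {\<omega> \<in> space M. \<forall>i<n. T i \<omega> \<in> A i \<and> S i \<omega> \<in> B i})"
      by (simp add: emeasure_eq_measure)
    also have "\<dots> = (\<Prod>i<n. ennreal (prob (T i -` A i \<inter> space M) * prob (S i -` B i \<inter> space M)))"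
      using AB ne unfolding n_def by (simp add: prob_indep_pairs[OF indep] prod_ennreal prod_nonneg)
    also have "\<dots> = (\<Prod>i<n. emeasure D (A i \<times> B i))"
    proof (rule prod.cong[OF refl])
      fix i assume "i \<in> {..<n}"
      then show "ennreal (prob (T i -` A i \<inter> space M) * prob (S i -` B i \<inter> space M)) = emeasure D (A i \<times> B i)"
        using AB by (simp add: emeasure_D[of _ _ i])
    qed
    also have "\<dots> = (\<Prod>A\<leftarrow>As. emeasure D A)"
      using AB unfolding n_def by (auto simp: prod.list_conv_set_nth atLeast0LessThan intro!: prod.cong)
    also have "\<dots> = emeasure (stream_space D) (scylinder (space D) As)"
      using As unfolding space_D G_def
      by (intro emeasure_stream_space_scylinder[symmetric] D.prob_space_axioms space_D)
        (auto simp: in_lists_conv_set sets_D)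
    finally show "emeasure (distr M (stream_space D) h) (scylinder (space D) As) =
        emeasure (stream_space D) (scylinder (space D) As)" .
  qed (auto simp: G_def space_D h_meas D.prob_space_stream_space intro!: prob_space_distr exI[of _ UNIV])
qed

lemma (in prob_space) truncated_mean_split:
  fixes X :: "'a \<Rightarrow> real"
  assumes [measurable]: "X \<in> borel_measurable M" and X_int: "integrable M X" and "a \<le> b"
  shows "integrable (distr M borel X) (\<lambda>s. s * indicator {..<b} s)"
    and "(\<integral>s. s * indicator {..<b} s \<partial>distr M borel X) =
      (\<integral>\<omega>. X \<omega> * indicator {..<a} (X \<omega>) \<partial>M) + (\<integral>\<omega>. X \<omega> * indicator {a..<b} (X \<omega>) \<partial>M)"
proof -
  have int: "integrable M (\<lambda>\<omega>. X \<omega> * indicator A (X \<omega>))" if "A \<in> sets borel" for A :: "real set"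
    using that by (intro Bochner_Integration.integrable_bound[OF X_int]) (auto simp: indicator_def)
  then show "integrable (distr M borel X) (\<lambda>s. s * indicator {..<b} s)"
    by (subst integrable_distr_eq) auto
  have "X \<omega> * indicator {..<b} (X \<omega>) = X \<omega> * indicator {..<a} (X \<omega>) + X \<omega> * indicator {a..<b} (X \<omega>)" for \<omega>
    using \<open>a \<le> b\<close> by (auto simp: indicator_def)
  then show "(\<integral>s. s * indicator {..<b} s \<partial>distr M borel X) =
      (\<integral>\<omega>. X \<omega> * indicator {..<a} (X \<omega>) \<partial>M) + (\<integral>\<omega>. X \<omega> * indicator {a..<b} (X \<omega>) \<partial>M)"
    by (subst integral_distr) (auto intro!: Bochner_Integration.integral_add int)
qed

lemma (in prob_space) card_below_distr:
  fixes X :: "'a \<Rightarrow> real"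
  assumes [measurable]: "X \<in> borel_measurable M" and "integrable M (\<lambda>\<omega>. (X \<omega>)\<^sup>2)"
    and "0 < lam" "0 \<le> mm" "mm \<le> mp" "mp \<le> c"
    and \<beta>: "\<beta> = lam * (\<integral>\<omega>. X \<omega> * indicator {..<mm} (X \<omega>) \<partial>M)
      + lam * (\<integral>\<omega>. X \<omega> * indicator {mm..<mp} (X \<omega>) \<partial>M) - 1/2"
    and "0 < \<beta>"
  shows "card_below lam mm mp c \<beta> (distr M borel X)"
proof -
  note work = truncated_mean_split[OF assms(1) square_integrable_imp_integrable[OF assms(1,2)] \<open>mm \<le> mp\<close>]
  have "lam * (\<integral>s. s * indicator {..<mp} s \<partial>distr M borel X) - 1/2 = \<beta>"
    unfolding work(2) \<beta> by (simp add: algebra_simps)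
  with work(1) show ?thesis
    using assms by (intro card_below.intro prob_space_distr) simp_all
qed

theorem mainTheorem6:
  fixes M :: "'w measure"
    and T S :: "nat \<Rightarrow> 'w \<Rightarrow> real"
    and lam m_minus m_plus c :: real
  assumes "prob_space M"
    and lam_pos: "0 < lam"
    and T_exp: "\<And>i. distributed M lborel (T i) (exponential_density lam)"
    and S_meas: "\<And>i. S i \<in> borel_measurable M"
    and S_iid: "\<And>i. distr M borel (S i) = distr M borel (S 0)"
    and indep: "prob_space.indep_vars M (\<lambda>_. borel)
                  (\<lambda>k. case k of Inl i \<Rightarrow> T i | Inr i \<Rightarrow> S i) UNIV"
    and S_nonneg: "AE \<omega> in M. 0 \<le> S 0 \<omega>"
    and S_cont: "\<And>x. measure M {\<omega> \<in> space M. S 0 \<omega> = x} = 0"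
    and S_sq: "integrable M (\<lambda>\<omega>. (S 0 \<omega>)\<^sup>2)"
    and rho_lt: "lam * (\<integral>\<omega>. S 0 \<omega> \<partial>M) < 1"
    and eps_lt: "1 - lam * (\<integral>\<omega>. S 0 \<omega> \<partial>M) < 1/2"
    and params: "0 \<le> m_minus" "m_minus \<le> m_plus" "m_plus \<le> c"
    and alpha_pos: "0 < 1/2 - lam * (\<integral>\<omega>. S 0 \<omega> * indicator {..<m_minus} (S 0 \<omega>) \<partial>M)"
    and beta_pos: "0 < lam * (\<integral>\<omega>. S 0 \<omega> * indicator {..<m_minus} (S 0 \<omega>) \<partial>M)
                      + lam * (\<integral>\<omega>. S 0 \<omega> * indicator {m_minus..<m_plus} (S 0 \<omega>) \<partial>M) - 1/2"
  defines "beta \<equiv> lam * (\<integral>\<omega>. S 0 \<omega> * indicator {..<m_minus} (S 0 \<omega>) \<partial>M)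
                   + lam * (\<integral>\<omega>. S 0 \<omega> * indicator {m_minus..<m_plus} (S 0 \<omega>) \<partial>M) - 1/2"
    and "B \<equiv> (\<lambda>\<omega>. below_len m_minus m_plus c (\<lambda>i. T i \<omega>) (\<lambda>i. S i \<omega>))"
  shows "(AE \<omega> in M. \<exists>t>0. ws m_minus m_plus c c (\<lambda>i. T i \<omega>) (\<lambda>i. S i \<omega>) t > c)
       \<and> integrable M B
       \<and> (\<integral>\<omega>. B \<omega> \<partial>M) \<le> m_plus / beta
       \<and> integrable (excess (distr M borel B)) (\<lambda>t. t)
       \<and> (\<integral>t. t \<partial>excess (distr M borel B)) \<le> (c + m_plus) / beta
       \<and> (c + m_plus) / beta \<le> 2 * c / beta
       \<and> integrable (excess (excess (distr M borel B))) (\<lambda>t. t)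
       \<and> (\<integral>t. t \<partial>excess (excess (distr M borel B))) \<le> (c + m_plus) / beta"
proof -
  interpret prob_space M by fact
  interpret card_below lam m_minus m_plus c beta "distr M borel (S 0)"
    using beta_pos unfolding beta_def[symmetric]
    by (intro card_below_distr S_meas S_sq lam_pos params beta_def[THEN meta_eq_to_obj_eq])
  define h where "h \<omega> = to_stream (\<lambda>i. (T i \<omega>, S i \<omega>))" for \<omega>
  have h: "h \<in> measurable M arrivals"
    unfolding h_def arrivals_def
    by (rule measurable_to_stream_pairs[OF sets_arrival]) (use T_exp S_meas in \<open>auto simp: distributed_def\<close>)
  have distr_h: "distr M arrivals h = arrivals"
    unfolding h_def arrivals_def arrival_def ET_def
    by (rule distr_iid_stream[OF \<open>prob_space M\<close> lam_pos T_exp S_meas S_iid indep])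
  have B: "B = (\<lambda>\<omega>. below_length (h \<omega>))"
    unfolding B_def below_length_def h_def by (simp add: to_stream_def)
  note law = below_length_transfer[OF h distr_h, folded B]
  have mrl: "mean_residual_bounded ((c + m_plus) / beta) (distr M borel B)"
    using mean_residual_bounded_below_length unfolding law(4) residual_bound_def .
  note mrl_e = mean_residual_bounded_excess[OF mrl]
  note mrl_ee = mean_residual_bounded_excess[OF mrl_e]
  have "AE \<omega> in M. \<exists>t>0. ws m_minus m_plus c c (\<lambda>i. T i \<omega>) (\<lambda>i. S i \<omega>) t > c"
    using law(1) by eventually_elim (drule exits_below_ws_exceeds, simp add: h_def to_stream_def)
  moreover have "(c + m_plus) / beta \<le> 2 * c / beta"
    using params beta_pos unfolding beta_def by (intro divide_right_mono) auto
  ultimately show ?thesis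
    using law(2,3) mean_residual_bounded_integrable[OF mrl_e] mean_residual_bounded_mean_le[OF mrl_e]
      mean_residual_bounded_integrable[OF mrl_ee] mean_residual_bounded_mean_le[OF mrl_ee]
    by blast
qed

end
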